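(* For any finite group $G$, with $H=A\oplus B$, the bilinear form $(\cdot,\cdot)$ and the involution $x\mapsto x^*$ defined below, there exists $U\in A$ such that $\mathcal H(G)=(H=A\oplus B,(\cdot,\cdot),x\mapsto x^*,U)$ is a structure algebra.
   Context: Construction: $\mathbb C[G]$ is the group algebra, $A$ its center with basis $E_\alpha=\sum_{g\in\alpha}g$ ($\alpha$ conjugacy classes). $M(G)=\operatorname{End}(\mathbb C[G])$ with matrix units $E_{g_1,g_2}$ ($E_{g_1,g_2}(h)=\delta_{g_2,h}g_1$). For each conjugacy class $\beta$ (under simultaneous conjugation) of ordered pairs $(s_1,s_2)$ with $s_1^2=s_2^2=1$ put $E_\beta=\sum_{(s',s'')\in\beta}E_{s',s''}$; $B$ is their span. $V(g)(x)=gxg^{-1}$ extends to $V:\mathbb C[G]\to M(G)$, $V_\alpha=V(E_\alpha)$. The multiplication on $H=A\oplus B$ is that of $A$ and of $B$ plus $E_\alpha E_\beta=V_\alpha E_\beta$, $E_\beta E_\alpha=E_\beta V_\alpha$. The involution $*$ is the linear extension of $g\mapsto g^{-1}$ on $A$ and matrix transposition on $B$ (so $E_\beta^*=E_{\beta^*}$, $\beta^*$ the class of $(s_2,s_1)$). The form is $(x,y)=f(xy)$ with $f$ linear, $f(E_\alpha)=\frac{1}{|G|}\delta_{\alpha,\{1\}}$, $f(E_\beta)=\frac1{|G|}\operatorname{tr}(E_\beta)$. Structure algebra: a tuple $(H=A\oplus B,(\cdot,\cdot),*,U)$ with $H$ finite-dimensional associative over $\mathbb C$, $(\cdot,\cdot)$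 symmetric invariant ($(xy,z)=(x,yz)$), $*$ an involutive antiautomorphism, $U\in A$, such that: (1) $A$ is a subalgebra in the center of $H$ whose unit is that of $H$; (2) $B$ is a two-sided ideal with a unit; (3) $(\cdot,\cdot)|_A,(\cdot,\cdot)|_B$ nondegenerate; (4) $(V_{K_B}(b_1),b_2)=\sum F^{ij}(f_i,b_1)(f_j,b_2)$ for $b_1,b_2\in B$, where $(f_i)$ is a basis of $A$ with inverse Gram matrix $F^{ij}$ and $V_{K_B}(x)=\sum G^{kl}g_kxg_l$ for a basis $(g_k)$ of $B$ with inverse Gram matrix $G^{kl}$; (5) $A^*=A$, $B^*=B$, $(x^*,y^* )=(x,y)$; (6) $U^2=K_{A,*}$; (7) $(U,b)=(K_{B,*},b)$ for $b\in B$; (8) $(aU)^*=aU$ for $a\in A$; here $K_{X,*}=\sum F^{ij}f_if_j^*$ computed in $X=A$ or $B$. *)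

theory Defs
  imports Complex_Main "HOL-Algebra.Group" "HOL-Library.Function_Algebras" "HOL-Library.Product_Plus"
begin

definition direct_sum :: "'h::ab_group_add set \<Rightarrow> 'h set \<Rightarrow> 'h set" where
  "direct_sum A B = {a + b | a b. a \<in> A \<and> b \<in> B}"

definition basis_invgram ::
  "(complex \<Rightarrow> 'h::ab_group_add \<Rightarrow> 'h) \<Rightarrow> ('h \<Rightarrow> 'h \<Rightarrow> complex) \<Rightarrow> 'h set
     \<Rightarrow> nat \<Rightarrow> (nat \<Rightarrow> 'h) \<Rightarrow> (nat \<Rightarrow> nat \<Rightarrow> complex) \<Rightarrow> bool" where
  "basis_invgram scale form X n f F \<longleftrightarrow>
     inj_on f {..<n} \<and> f ` {..<n} \<subseteq> X \<and>
     \<not> module.dependent scale (f ` {..<n}) \<and> module.span scale (f ` {..<n}) = X \<and>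
     (\<forall>i<n. \<forall>k<n. (\<Sum>j<n. F i j * form (f j) (f k)) = (if i = k then 1 else 0)) \<and>
     (\<forall>i<n. \<forall>k<n. (\<Sum>j<n. form (f i) (f j) * F j k) = (if i = k then 1 else 0))"

definition K_star ::
  "(complex \<Rightarrow> 'h::ab_group_add \<Rightarrow> 'h) \<Rightarrow> ('h \<Rightarrow> 'h \<Rightarrow> 'h) \<Rightarrow> ('h \<Rightarrow> 'h)
     \<Rightarrow> nat \<Rightarrow> (nat \<Rightarrow> 'h) \<Rightarrow> (nat \<Rightarrow> nat \<Rightarrow> complex) \<Rightarrow> 'h" where
  "K_star scale mul star n f F = (\<Sum>i<n. \<Sum>j<n. scale (F i j) (mul (f i) (star (f j))))"

definition V_K ::
  "(complex \<Rightarrow> 'h::ab_group_add \<Rightarrow> 'h) \<Rightarrow> ('h \<Rightarrow> 'h \<Rightarrow> 'h)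
     \<Rightarrow> nat \<Rightarrow> (nat \<Rightarrow> 'h) \<Rightarrow> (nat \<Rightarrow> nat \<Rightarrow> complex) \<Rightarrow> 'h \<Rightarrow> 'h" where
  "V_K scale mul m g G x = (\<Sum>k<m. \<Sum>l<m. scale (G k l) (mul (mul (g k) x) (g l)))"

definition structure_algebra ::
  "(complex \<Rightarrow> 'h::ab_group_add \<Rightarrow> 'h) \<Rightarrow> 'h set \<Rightarrow> 'h set \<Rightarrow> ('h \<Rightarrow> 'h \<Rightarrow> 'h) \<Rightarrow> 'h
     \<Rightarrow> ('h \<Rightarrow> 'h \<Rightarrow> complex) \<Rightarrow> ('h \<Rightarrow> 'h) \<Rightarrow> 'h \<Rightarrow> bool" where
  "structure_algebra scale A B mul unit form star U \<longleftrightarrow>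
   (let H = direct_sum A B in
     \<comment> \<open>H = A \<oplus> B is a finite-dimensional complex vector space\<close>
     vector_space scale \<and> module.subspace scale A \<and> module.subspace scale B \<and> A \<inter> B = {0} \<and>
     (\<exists>S. finite S \<and> S \<subseteq> H \<and> module.span scale S = H) \<and>
     \<comment> \<open>H is an associative algebra with unit\<close>
     (\<forall>x\<in>H. \<forall>y\<in>H. mul x y \<in> H) \<and>
     (\<forall>x\<in>H. \<forall>y\<in>H. \<forall>z\<in>H. mul (x + y) z = mul x z + mul y z \<and> mul x (y + z) = mul x y + mul x z) \<and>
     (\<forall>c. \<forall>x\<in>H. \<forall>y\<in>H. mul (scale c x) y = scale c (mul x y) \<and> mul x (scale c y) = scale c (mul x y)) \<and>
     (\<forall>x\<in>H. \<forall>y\<in>H. \<forall>z\<in>H. mul (mul x y) z = mul x (mul y z)) \<and>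
     unit \<in> H \<and> (\<forall>x\<in>H. mul unit x = x \<and> mul x unit = x) \<and>
     \<comment> \<open>symmetric invariant bilinear form\<close>
     (\<forall>x\<in>H. \<forall>y\<in>H. \<forall>z\<in>H. form (x + y) z = form x z + form y z) \<and>
     (\<forall>c. \<forall>x\<in>H. \<forall>y\<in>H. form (scale c x) y = c * form x y) \<and>
     (\<forall>x\<in>H. \<forall>y\<in>H. form x y = form y x) \<and>
     (\<forall>x\<in>H. \<forall>y\<in>H. \<forall>z\<in>H. form (mul x y) z = form x (mul y z)) \<and>
     \<comment> \<open>involutive (linear) antiautomorphism\<close>
     (\<forall>x\<in>H. star x \<in> H) \<and>
     (\<forall>x\<in>H. \<forall>y\<in>H. star (x + y) = star x + star y) \<and>
     (\<forall>c. \<forall>x\<in>H. star (scale c x) = scale c (star x)) \<and>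
     (\<forall>x\<in>H. \<forall>y\<in>H. star (mul x y) = mul (star y) (star x)) \<and>
     (\<forall>x\<in>H. star (star x) = x) \<and>
     \<comment> \<open>U \<in> A\<close>
     U \<in> A \<and>
     \<comment> \<open>(1)\<close>
     (\<forall>x\<in>A. \<forall>y\<in>A. mul x y \<in> A) \<and> (\<forall>a\<in>A. \<forall>x\<in>H. mul a x = mul x a) \<and> unit \<in> A \<and>
     \<comment> \<open>(2)\<close>
     (\<forall>b\<in>B. \<forall>x\<in>H. mul b x \<in> B \<and> mul x b \<in> B) \<and>
     (\<exists>e\<in>B. \<forall>b\<in>B. mul e b = b \<and> mul b e = b) \<and>
     \<comment> \<open>(3)\<close>
     (\<forall>x\<in>A. (\<forall>y\<in>A. form x y = 0) \<longrightarrow> x = 0) \<and>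
     (\<forall>x\<in>B. (\<forall>y\<in>B. form x y = 0) \<longrightarrow> x = 0) \<and>
     \<comment> \<open>(4)\<close>
     (\<forall>n f F m g G. basis_invgram scale form A n f F \<longrightarrow> basis_invgram scale form B m g G \<longrightarrow>
        (\<forall>b1\<in>B. \<forall>b2\<in>B. form (V_K scale mul m g G b1) b2
            = (\<Sum>i<n. \<Sum>j<n. F i j * form (f i) b1 * form (f j) b2))) \<and>
     \<comment> \<open>(5)\<close>
     star ` A = A \<and> star ` B = B \<and> (\<forall>x\<in>H. \<forall>y\<in>H. form (star x) (star y) = form x y) \<and>
     \<comment> \<open>(6)\<close>
     (\<forall>n f F. basis_invgram scale form A n f F \<longrightarrow> mul U U = K_star scale mul star n f F) \<and>
     \<comment> \<open>(7)\<close>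
     (\<forall>m g G. basis_invgram scale form B m g G \<longrightarrow>
        (\<forall>b\<in>B. form U b = form (K_star scale mul star m g G) b)) \<and>
     \<comment> \<open>(8)\<close>
     (\<forall>a\<in>A. star (mul a U) = mul a U))"

text \<open>Elements of C[G] are functions 'g => complex (supported on carrier G);
  elements of M(G) = End(C[G]) are matrices 'g => 'g => complex, where the matrix unit
  E_{g1,g2} (mapping g2 to g1) has entry 1 at row g1, column g2.\<close>

type_synonym 'g Hel = "('g \<Rightarrow> complex) \<times> ('g \<Rightarrow> 'g \<Rightarrow> complex)"

definition supp_in :: "('g, 'm) monoid_scheme \<Rightarrow> ('g \<Rightarrow> complex) \<Rightarrow> bool" where
  "supp_in G a \<longleftrightarrow> (\<forall>g. g \<notin> carrier G \<longrightarrow> a g = 0)"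

definition conv :: "('g, 'm) monoid_scheme \<Rightarrow> ('g \<Rightarrow> complex) \<Rightarrow> ('g \<Rightarrow> complex) \<Rightarrow> 'g \<Rightarrow> complex" where
  "conv G a b = (\<lambda>g. if g \<in> carrier G then (\<Sum>h\<in>carrier G. a h * b (inv\<^bsub>G\<^esub> h \<otimes>\<^bsub>G\<^esub> g)) else 0)"

definition centerA :: "('g, 'm) monoid_scheme \<Rightarrow> ('g \<Rightarrow> complex) set" where
  "centerA G = {a. supp_in G a \<and> (\<forall>x. supp_in G x \<longrightarrow> conv G a x = conv G x a)}"

definition pair_class :: "('g, 'm) monoid_scheme \<Rightarrow> 'g \<times> 'g \<Rightarrow> ('g \<times> 'g) set" where
  "pair_class G p = {(h \<otimes>\<^bsub>G\<^esub> fst p \<otimes>\<^bsub>G\<^esub> inv\<^bsub>G\<^esub> h, h \<otimes>\<^bsub>G\<^esub> snd p \<otimes>\<^bsub>G\<^esub> inv\<^bsub>G\<^esub> h) | h. h \<in> carrier G}"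

definition betas :: "('g, 'm) monoid_scheme \<Rightarrow> ('g \<times> 'g) set set" where
  "betas G = {pair_class G (s1, s2) | s1 s2. s1 \<in> carrier G \<and> s2 \<in> carrier G \<and>
                 s1 \<otimes>\<^bsub>G\<^esub> s1 = \<one>\<^bsub>G\<^esub> \<and> s2 \<otimes>\<^bsub>G\<^esub> s2 = \<one>\<^bsub>G\<^esub>}"

definition E_beta :: "('g \<times> 'g) set \<Rightarrow> 'g \<Rightarrow> 'g \<Rightarrow> complex" where
  "E_beta \<beta> = (\<lambda>x y. if (x, y) \<in> \<beta> then 1 else 0)"

definition spanB :: "('g, 'm) monoid_scheme \<Rightarrow> ('g \<Rightarrow> 'g \<Rightarrow> complex) set" where
  "spanB G = {(\<lambda>x y. \<Sum>\<beta>\<in>betas G. c \<beta> * E_beta \<beta> x y) | c. True}"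

definition mmul :: "('g, 'm) monoid_scheme \<Rightarrow> ('g \<Rightarrow> 'g \<Rightarrow> complex) \<Rightarrow> ('g \<Rightarrow> 'g \<Rightarrow> complex) \<Rightarrow> 'g \<Rightarrow> 'g \<Rightarrow> complex" where
  "mmul G b1 b2 = (\<lambda>x y. \<Sum>z\<in>carrier G. b1 x z * b2 z y)"

text \<open>V : C[G] -> M(G), linear extension of V(g)(x) = g x g^{-1}\<close>
definition Vmat :: "('g, 'm) monoid_scheme \<Rightarrow> ('g \<Rightarrow> complex) \<Rightarrow> 'g \<Rightarrow> 'g \<Rightarrow> complex" where
  "Vmat G a = (\<lambda>y x. if y \<in> carrier G \<and> x \<in> carrier G then
       (\<Sum>g\<in>carrier G. a g * (if y = g \<otimes>\<^bsub>G\<^esub> x \<otimes>\<^bsub>G\<^esub> inv\<^bsub>G\<^esub> g then 1 else 0)) else 0)"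

definition HA :: "('g, 'm) monoid_scheme \<Rightarrow> 'g Hel set" where
  "HA G = {(a, 0) | a. a \<in> centerA G}"

definition HB :: "('g, 'm) monoid_scheme \<Rightarrow> 'g Hel set" where
  "HB G = {(0, b) | b. b \<in> spanB G}"

definition scaleH :: "complex \<Rightarrow> 'g Hel \<Rightarrow> 'g Hel" where
  "scaleH c x = ((\<lambda>g. c * fst x g), (\<lambda>u v. c * snd x u v))"

definition multH :: "('g, 'm) monoid_scheme \<Rightarrow> 'g Hel \<Rightarrow> 'g Hel \<Rightarrow> 'g Hel" where
  "multH G x y = (conv G (fst x) (fst y),
      mmul G (snd x) (snd y) + mmul G (Vmat G (fst x)) (snd y) + mmul G (snd x) (Vmat G (fst y)))"

definition oneH :: "('g, 'm) monoid_scheme \<Rightarrow> 'g Hel" where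
  "oneH G = ((\<lambda>g. if g = \<one>\<^bsub>G\<^esub> then 1 else 0), 0)"

definition starH :: "('g, 'm) monoid_scheme \<Rightarrow> 'g Hel \<Rightarrow> 'g Hel" where
  "starH G x = ((\<lambda>g. if g \<in> carrier G then fst x (inv\<^bsub>G\<^esub> g) else 0), (\<lambda>u v. snd x v u))"

definition fH :: "('g, 'm) monoid_scheme \<Rightarrow> 'g Hel \<Rightarrow> complex" where
  "fH G x = (fst x \<one>\<^bsub>G\<^esub> + (\<Sum>u\<in>carrier G. snd x u u)) / of_nat (card (carrier G))"

definition formH :: "('g, 'm) monoid_scheme \<Rightarrow> 'g Hel \<Rightarrow> 'g Hel \<Rightarrow> complex" where
  "formH G x y = fH G (multH G x y)"

end

theory Submission
  imports Defs
begin

text \<open>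
  The centre \<open>A\<close> of \<open>\<complex>[G]\<close> is the space of class functions, and \<open>B\<close> is the space of matrices
  supported on pairs of involutions and invariant under simultaneous conjugation; the algebraic
  conditions follow from this description. The trace conditions (4), (6) and (7) are contractions
  \<open>\<Sum> F\<^sup>i\<^sup>j \<Phi>(f\<^sub>i, f\<^sub>j)\<close> of a bilinear \<open>\<Phi>\<close> against an arbitrary basis with the inverse of its Gram
  matrix. Such a contraction takes the same value for every reproducing frame of the space, so it
  can be computed with the overcomplete frames of class sums of \<open>A\<close> and of pair-class sums of \<open>B\<close>,
  where it becomes a counting sum over \<open>G\<close>. For \<open>U = \<Sum>\<^sub>x x\<^sup>2\<close> these sums give \<open>U\<^sup>2 = K\<^sub>A\<^sub>,\<^sub>*\<close>
  and \<open>(U, b) = (K\<^sub>B\<^sub>,\<^sub>*, b)\<close>, and \<open>(aU)\<^sup>* = aU\<close> because the substitution \<open>x \<mapsto> z x\<close> makes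
  \<open>x^-2 z\<close> conjugate to \<open>x^-2 z^-1\<close>.
\<close>

lemma sum_swap_outer_pairs:
  "(\<Sum>a\<in>A. \<Sum>b\<in>B. \<Sum>c\<in>C. \<Sum>d\<in>D. f a b c d) = (\<Sum>c\<in>C. \<Sum>d\<in>D. \<Sum>a\<in>A. \<Sum>b\<in>B. f a b c d)"
proof -
  have "(\<Sum>a\<in>A. \<Sum>b\<in>B. \<Sum>c\<in>C. \<Sum>d\<in>D. f a b c d) = (\<Sum>a\<in>A. \<Sum>c\<in>C. \<Sum>b\<in>B. \<Sum>d\<in>D. f a b c d)"
    by (intro sum.cong refl sum.swap)
  also have "\<dots> = (\<Sum>a\<in>A. \<Sum>c\<in>C. \<Sum>d\<in>D. \<Sum>b\<in>B. f a b c d)"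
    by (intro sum.cong refl sum.swap)
  also have "\<dots> = (\<Sum>c\<in>C. \<Sum>a\<in>A. \<Sum>d\<in>D. \<Sum>b\<in>B. f a b c d)"
    by (rule sum.swap)
  also have "\<dots> = (\<Sum>c\<in>C. \<Sum>d\<in>D. \<Sum>a\<in>A. \<Sum>b\<in>B. f a b c d)"
    by (intro sum.cong refl sum.swap)
  finally show ?thesis .
qed

lemma sum_swap_inner_outer:
  "(\<Sum>a\<in>A. \<Sum>b\<in>B. \<Sum>c\<in>C. f a b c) = (\<Sum>c\<in>C. \<Sum>a\<in>A. \<Sum>b\<in>B. f a b c)"
proof -
  have "(\<Sum>a\<in>A. \<Sum>b\<in>B. \<Sum>c\<in>C. f a b c) = (\<Sum>a\<in>A. \<Sum>c\<in>C. \<Sum>b\<in>B. f a b c)"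
    by (intro sum.cong refl sum.swap)
  also have "\<dots> = (\<Sum>c\<in>C. \<Sum>a\<in>A. \<Sum>b\<in>B. f a b c)"
    by (rule sum.swap)
  finally show ?thesis .
qed

lemma sum_delta_pair:
  assumes "finite A" "finite B" "p \<in> A" "q \<in> B"
  shows "(\<Sum>a\<in>A. \<Sum>b\<in>B. if a = p \<and> b = q then f a b else 0) = f p q"
proof -
  have "(\<Sum>a\<in>A. \<Sum>b\<in>B. if a = p \<and> b = q then f a b else 0)
      = (\<Sum>a\<in>A. if a = p then (\<Sum>b\<in>B. if b = q then f a b else 0) else 0)"
    by (intro sum.cong refl) auto
  then show ?thesis using assms by simp
qed

lemma vector_space_scaleH: "vector_space scaleH"
  by unfold_locales (auto simp: scaleH_def fun_eq_iff algebra_simps)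

lemma image_eq_if_involutive:
  assumes "\<And>x. x \<in> X \<Longrightarrow> f x \<in> X" "\<And>x. x \<in> X \<Longrightarrow> f (f x) = x" shows "f ` X = X"
  using assms by (metis image_subset_iff subsetI subset_antisym image_eqI)

lemma sum_fun_apply: "(\<Sum>i\<in>A. f i) x = (\<Sum>i\<in>A. f i x)"
  by (induct A rule: infinite_finite_induct) auto

section \<open>Bilinear forms and reproducing frames\<close>

definition bilinear_form :: "(complex \<Rightarrow> 'h::ab_group_add \<Rightarrow> 'h) \<Rightarrow> ('h \<Rightarrow> 'h \<Rightarrow> complex) \<Rightarrow> bool"
  where "bilinear_form scale \<Phi> \<longleftrightarrow>
    (\<forall>x y z. \<Phi> (x + y) z = \<Phi> x z + \<Phi> y z) \<and> (\<forall>c x z. \<Phi> (scale c x) z = c * \<Phi> x z) \<and>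
    (\<forall>x y z. \<Phi> z (x + y) = \<Phi> z x + \<Phi> z y) \<and> (\<forall>c x z. \<Phi> z (scale c x) = c * \<Phi> z x)"

lemma bilinear_form_sum_left:
  assumes "bilinear_form scale \<Phi>"
  shows "\<Phi> (\<Sum>a\<in>A. scale (c a) (v a)) z = (\<Sum>a\<in>A. c a * \<Phi> (v a) z)"
proof -
  have "\<Phi> 0 z = 0"
    using assms add_0 unfolding bilinear_form_def by (metis add_cancel_right_right)
  then show ?thesis
    using assms by (induct A rule: infinite_finite_induct) (simp_all add: bilinear_form_def)
qed

lemma bilinear_form_sum_right:
  assumes "bilinear_form scale \<Phi>"
  shows "\<Phi> z (\<Sum>a\<in>A. scale (c a) (v a)) = (\<Sum>a\<in>A. c a * \<Phi> z (v a))"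
proof -
  have "\<Phi> z 0 = 0"
    using assms add_0 unfolding bilinear_form_def by (metis add_cancel_right_right)
  then show ?thesis
    using assms by (induct A rule: infinite_finite_induct) (simp_all add: bilinear_form_def)
qed

text \<open>A reproducing frame generalises a basis together with the inverse of its Gram matrix:
  the family may be overcomplete, and only the expansion formula is required.\<close>

definition reproducing_frame ::
  "(complex \<Rightarrow> 'h::ab_group_add \<Rightarrow> 'h) \<Rightarrow> ('h \<Rightarrow> 'h \<Rightarrow> complex) \<Rightarrow> 'h set
     \<Rightarrow> 'i set \<Rightarrow> ('i \<Rightarrow> 'h) \<Rightarrow> ('i \<Rightarrow> 'i \<Rightarrow> complex) \<Rightarrow> bool" where
  "reproducing_frame scale form X J e E \<longleftrightarrow> finite J \<and> e ` J \<subseteq> X \<and>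
     (\<forall>w\<in>X. w = (\<Sum>a\<in>J. scale (\<Sum>b\<in>J. E a b * form (e b) w) (e a)))"

lemma bilinear_form_reproducing_frame_left:
  assumes "reproducing_frame scale form X J e E" "bilinear_form scale \<Phi>" "w \<in> X"
  shows "\<Phi> w y = (\<Sum>a\<in>J. \<Sum>b\<in>J. E a b * form (e b) w * \<Phi> (e a) y)"
proof -
  have "w = (\<Sum>a\<in>J. scale (\<Sum>b\<in>J. E a b * form (e b) w) (e a))"
    using assms(1,3) by (simp add: reproducing_frame_def)
  then have "\<Phi> w y = \<Phi> (\<Sum>a\<in>J. scale (\<Sum>b\<in>J. E a b * form (e b) w) (e a)) y"
    by (rule arg_cong)
  also have "\<dots> = (\<Sum>a\<in>J. (\<Sum>b\<in>J. E a b * form (e b) w) * \<Phi> (e a) y)"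
    by (rule bilinear_form_sum_left[OF assms(2)])
  finally show ?thesis by (simp add: sum_distrib_right)
qed

lemma bilinear_form_reproducing_frame_right:
  assumes "reproducing_frame scale form X J e E" "bilinear_form scale \<Phi>" "w \<in> X"
  shows "\<Phi> x w = (\<Sum>a\<in>J. \<Sum>b\<in>J. E a b * form (e b) w * \<Phi> x (e a))"
proof -
  have "w = (\<Sum>a\<in>J. scale (\<Sum>b\<in>J. E a b * form (e b) w) (e a))"
    using assms(1,3) by (simp add: reproducing_frame_def)
  then have "\<Phi> x w = \<Phi> x (\<Sum>a\<in>J. scale (\<Sum>b\<in>J. E a b * form (e b) w) (e a))"
    by (rule arg_cong)
  also have "\<dots> = (\<Sum>a\<in>J. (\<Sum>b\<in>J. E a b * form (e b) w) * \<Phi> x (e a))"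
    by (rule bilinear_form_sum_right[OF assms(2)])
  finally show ?thesis by (simp add: sum_distrib_right)
qed

text \<open>Expanding \<open>e b\<close> in the frame \<open>e'\<close> and folding \<open>e' d\<close> back in the frame \<open>e\<close> moves the
  contraction from one frame to the other, at the price of transposing \<open>E'\<close>.\<close>

lemma contraction_reproducing_frame_swap:
  assumes form_sym: "\<And>x y. x \<in> X \<Longrightarrow> y \<in> X \<Longrightarrow> form x y = form y x"
    and e: "reproducing_frame scale form X J e E" and e': "reproducing_frame scale form X K e' E'"
    and \<Phi>: "bilinear_form scale \<Phi>"
  shows "(\<Sum>a\<in>J. \<Sum>b\<in>J. E a b * \<Phi> (e a) (e b)) = (\<Sum>c\<in>K. \<Sum>d\<in>K. E' c d * \<Phi> (e' d) (e' c))"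
proof -
  have eX: "e a \<in> X" if "a \<in> J" for a using e that by (auto simp: reproducing_frame_def)
  have e'X: "e' c \<in> X" if "c \<in> K" for c using e' that by (auto simp: reproducing_frame_def)
  have "(\<Sum>a\<in>J. \<Sum>b\<in>J. E a b * \<Phi> (e a) (e b))
      = (\<Sum>a\<in>J. \<Sum>b\<in>J. \<Sum>c\<in>K. \<Sum>d\<in>K. E' c d * (E a b * form (e b) (e' d) * \<Phi> (e a) (e' c)))"
    using eX e'X form_sym
    by (intro sum.cong refl) (simp add: bilinear_form_reproducing_frame_right[OF e' \<Phi>]
        sum_distrib_left mult_ac)
  also have "\<dots> = (\<Sum>c\<in>K. \<Sum>d\<in>K. \<Sum>a\<in>J. \<Sum>b\<in>J. E' c d * (E a b * form (e b) (e' d) * \<Phi> (e a) (e' c)))"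
    by (rule sum_swap_outer_pairs)
  also have "\<dots> = (\<Sum>c\<in>K. \<Sum>d\<in>K. E' c d * \<Phi> (e' d) (e' c))"
    using e'X by (intro sum.cong refl)
      (simp add: bilinear_form_reproducing_frame_left[OF e \<Phi>] sum_distrib_left[symmetric])
  finally show ?thesis .
qed

lemma contraction_reproducing_frame_eq:
  assumes form_sym: "\<And>x y. x \<in> X \<Longrightarrow> y \<in> X \<Longrightarrow> form x y = form y x"
    and e: "reproducing_frame scale form X J e E" and e': "reproducing_frame scale form X K e' E'"
    and \<Phi>: "bilinear_form scale \<Phi>"
  shows "(\<Sum>a\<in>J. \<Sum>b\<in>J. E a b * \<Phi> (e a) (e b)) = (\<Sum>c\<in>K. \<Sum>d\<in>K. E' c d * \<Phi> (e' c) (e' d))"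
  using contraction_reproducing_frame_swap[OF form_sym e e' \<Phi>]
    contraction_reproducing_frame_swap[OF form_sym e' e' \<Phi>] by simp

lemma basis_invgram_reproducing_frame:
  assumes "vector_space scale"
    and basis: "basis_invgram scale form X n f F" and form: "bilinear_form scale form"
  shows "reproducing_frame scale form X {..<n} f F"
  unfolding reproducing_frame_def
proof (intro conjI ballI)
  interpret vector_space scale by fact
  show "finite {..<n}" "f ` {..<n} \<subseteq> X"
    using basis by (auto simp: basis_invgram_def)
  fix w assume "w \<in> X"
  then have "w \<in> span (f ` {..<n})"
    using basis by (simp add: basis_invgram_def)
  then obtain u where "w = (\<Sum>v\<in>f ` {..<n}. scale (u v) v)"
    using span_finite[of "f ` {..<n}"] by auto
  also have "\<dots> = (\<Sum>k<n. scale (u (f k)) (f k))"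
    using basis by (simp add: basis_invgram_def sum.reindex)
  finally have w: "w = (\<Sum>k<n. scale (u (f k)) (f k))" .
  have "(\<Sum>j<n. F i j * form (f j) w) = u (f i)" if "i < n" for i
  proof -
    have "(\<Sum>j<n. F i j * form (f j) w) = (\<Sum>j<n. \<Sum>k<n. u (f k) * (F i j * form (f j) (f k)))"
      by (subst w) (simp add: bilinear_form_sum_right[OF form] sum_distrib_left mult.left_commute)
    also have "\<dots> = (\<Sum>k<n. u (f k) * (\<Sum>j<n. F i j * form (f j) (f k)))"
      by (subst sum.swap) (simp add: sum_distrib_left)
    also have "\<dots> = u (f i)"
      using basis that by (simp add: basis_invgram_def if_distrib[of "\<lambda>t. _ * t"] cong: if_cong)
    finally show ?thesis .
  qed
  then show "w = (\<Sum>i<n. scale (\<Sum>j<n. F i j * form (f j) w) (f i))"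
    by (subst w) simp
qed

lemma subset_span_reproducing_frame:
  assumes "vector_space scale" and "reproducing_frame scale form X J e E"
  shows "X \<subseteq> module.span scale (e ` J)"
proof
  interpret vector_space scale by fact
  fix w assume "w \<in> X"
  then have "w = (\<Sum>a\<in>J. scale (\<Sum>b\<in>J. E a b * form (e b) w) (e a))"
    using assms(2) by (simp add: reproducing_frame_def)
  also have "\<dots> \<in> span (e ` J)"
    by (intro span_sum span_scale span_base imageI)
  finally show "w \<in> span (e ` J)" .
qed

lemma finite_span_direct_sum:
  assumes V: "vector_space scale" and A: "module.subspace scale A" and B: "module.subspace scale B"
    and eA: "reproducing_frame scale form A J e E" and eB: "reproducing_frame scale form' B K e' E'"
  shows "\<exists>S. finite S \<and> S \<subseteq> direct_sum A B \<and> module.span scale S = direct_sum A B"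
proof (intro exI conjI)
  interpret vector_space scale by (rule V)
  let ?S = "e ` J \<union> e' ` K"
  show "finite ?S" using eA eB by (simp add: reproducing_frame_def)
  have "A \<subseteq> direct_sum A B" "B \<subseteq> direct_sum A B"
    using subspace_0[OF A] subspace_0[OF B] unfolding direct_sum_def by force+
  then show S: "?S \<subseteq> direct_sum A B" using eA eB by (auto simp: reproducing_frame_def)
  have "span (e ` J) \<subseteq> span ?S" "span (e' ` K) \<subseteq> span ?S" by (simp_all add: span_mono)
  then have "A \<subseteq> span ?S" "B \<subseteq> span ?S"
    using subset_span_reproducing_frame[OF V eA] subset_span_reproducing_frame[OF V eB] by auto
  moreover have "span ?S \<subseteq> direct_sum A B"
    using S subspace_sums[OF A B] unfolding direct_sum_def by (rule span_minimal)
  ultimately show "span ?S = direct_sum A B"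
    by (auto simp: direct_sum_def intro: span_add)
qed

section \<open>Conjugation and reindexing in groups\<close>

context group
begin

lemma inv_mult_cancel_left [simp]: "h \<in> carrier G \<Longrightarrow> x \<in> carrier G \<Longrightarrow> inv h \<otimes> (h \<otimes> x) = x"
  by (simp add: m_assoc[symmetric])

lemma mult_inv_cancel_left [simp]: "h \<in> carrier G \<Longrightarrow> x \<in> carrier G \<Longrightarrow> h \<otimes> (inv h \<otimes> x) = x"
  by (simp add: m_assoc[symmetric])

definition conjg :: "'a \<Rightarrow> 'a \<Rightarrow> 'a" where
  "conjg h x = h \<otimes> x \<otimes> inv h"

lemma conjg_closed [intro, simp]: "h \<in> carrier G \<Longrightarrow> x \<in> carrier G \<Longrightarrow> conjg h x \<in> carrier G"
  by (simp add: conjg_def)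

lemma conjg_conjg:
  "h \<in> carrier G \<Longrightarrow> k \<in> carrier G \<Longrightarrow> x \<in> carrier G \<Longrightarrow> conjg h (conjg k x) = conjg (h \<otimes> k) x"
  by (simp add: conjg_def m_assoc inv_mult_group)

lemma conjg_one_left [simp]: "x \<in> carrier G \<Longrightarrow> conjg \<one> x = x"
  by (simp add: conjg_def)

lemma conjg_one_right [simp]: "h \<in> carrier G \<Longrightarrow> conjg h \<one> = \<one>"
  by (simp add: conjg_def)

lemma conjg_inv_conjg [simp]: "h \<in> carrier G \<Longrightarrow> x \<in> carrier G \<Longrightarrow> conjg (inv h) (conjg h x) = x"
  by (simp add: conjg_def m_assoc)

lemma conjg_conjg_inv [simp]: "h \<in> carrier G \<Longrightarrow> x \<in> carrier G \<Longrightarrow> conjg h (conjg (inv h) x) = x"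
  by (simp add: conjg_def m_assoc)

lemma conjg_mult:
  "h \<in> carrier G \<Longrightarrow> x \<in> carrier G \<Longrightarrow> y \<in> carrier G \<Longrightarrow> conjg h (x \<otimes> y) = conjg h x \<otimes> conjg h y"
  by (simp add: conjg_def m_assoc)

lemma inv_conjg: "h \<in> carrier G \<Longrightarrow> x \<in> carrier G \<Longrightarrow> inv (conjg h x) = conjg h (inv x)"
  by (simp add: conjg_def m_assoc inv_mult_group)

lemma conjg_eq_iff:
  "h \<in> carrier G \<Longrightarrow> x \<in> carrier G \<Longrightarrow> y \<in> carrier G \<Longrightarrow> (y = conjg h x) = (x = conjg (inv h) y)"
  by (metis conjg_inv_conjg conjg_conjg_inv inv_closed)

lemma conjg_inj_iff [simp]:
  "h \<in> carrier G \<Longrightarrow> x \<in> carrier G \<Longrightarrow> y \<in> carrier G \<Longrightarrow> (conjg h x = conjg h y) = (x = y)"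
  by (metis conjg_inv_conjg)

lemma conjg_conjg_conjg: "h \<in> carrier G \<Longrightarrow> k \<in> carrier G \<Longrightarrow> x \<in> carrier G \<Longrightarrow>
    conjg (conjg h k) (conjg h x) = conjg h (conjg k x)"
  by (simp add: conjg_def m_assoc inv_mult_group)

lemma sum_reindex_conjg: "h \<in> carrier G \<Longrightarrow> (\<Sum>x\<in>carrier G. f (conjg h x)) = (\<Sum>x\<in>carrier G. f x)"
  using sum.reindex_bij_betw[of "conjg h" "carrier G" "carrier G" f]
  by (metis bij_betw_byWitness[of "carrier G" "conjg (inv h)" "conjg h"] conjg_closed conjg_inv_conjg
      conjg_conjg_inv inv_closed image_subsetI)

lemma sum_reindex_mult_left: "h \<in> carrier G \<Longrightarrow> (\<Sum>x\<in>carrier G. f (h \<otimes> x)) = (\<Sum>x\<in>carrier G. f x)"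
  using sum.reindex_bij_betw[of "\<lambda>x. h \<otimes> x" "carrier G" "carrier G" f]
    bij_betw_byWitness[of "carrier G" "\<lambda>x. inv h \<otimes> x" "\<lambda>x. h \<otimes> x" "carrier G"]
  by (simp add: m_assoc[symmetric] image_subset_iff)

lemma sum_reindex_mult_right: "h \<in> carrier G \<Longrightarrow> (\<Sum>x\<in>carrier G. f (x \<otimes> h)) = (\<Sum>x\<in>carrier G. f x)"
  using sum.reindex_bij_betw[of "\<lambda>x. x \<otimes> h" "carrier G" "carrier G" f]
    bij_betw_byWitness[of "carrier G" "\<lambda>x. x \<otimes> inv h" "\<lambda>x. x \<otimes> h" "carrier G"]
  by (simp add: m_assoc image_subset_iff)

lemma sum_reindex_inv: "(\<Sum>x\<in>carrier G. f (inv x)) = (\<Sum>x\<in>carrier G. f x)"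
  using sum.reindex_bij_betw[of "\<lambda>x. inv x" "carrier G" "carrier G" f]
    bij_betw_byWitness[of "carrier G" "\<lambda>x. inv x" "\<lambda>x. inv x" "carrier G"]
  by (simp add: image_subset_iff)

end

section \<open>The centre of the group algebra\<close>

locale finite_group = group G for G (structure) +
  assumes finite_carrier [simp]: "finite (carrier G)"
begin

abbreviation C where "C \<equiv> carrier G"

abbreviation card_G :: complex where "card_G \<equiv> of_nat (card C)"

lemma carrier_nonempty [simp]: "C \<noteq> {}"
  using one_closed by blast

lemma card_G_nonzero [simp]: "card_G \<noteq> 0"
  by simp

definition delta :: "'a \<Rightarrow> 'a \<Rightarrow> complex" where
  "delta g = (\<lambda>z. if z = g then 1 else 0)"

definition class_function :: "('a \<Rightarrow> complex) \<Rightarrow> bool" where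
  "class_function a \<longleftrightarrow> supp_in G a \<and> (\<forall>h\<in>C. \<forall>x\<in>C. a (conjg h x) = a x)"

definition star_fun :: "('a \<Rightarrow> complex) \<Rightarrow> 'a \<Rightarrow> complex" where
  "star_fun a = (\<lambda>g. if g \<in> C then a (inv g) else 0)"

lemma class_functionD: "class_function a \<Longrightarrow> h \<in> C \<Longrightarrow> x \<in> C \<Longrightarrow> a (conjg h x) = a x"
  by (simp add: class_function_def)

lemma class_function_outside: "class_function a \<Longrightarrow> x \<notin> C \<Longrightarrow> a x = 0"
  by (simp add: class_function_def supp_in_def)

lemma class_function_zero: "class_function 0"
  by (simp add: class_function_def supp_in_def)

lemma conv_eq: "z \<in> C \<Longrightarrow> conv G a b z = (\<Sum>h\<in>C. a h * b (inv h \<otimes> z))"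
  by (simp add: conv_def)

lemma conv_outside: "z \<notin> C \<Longrightarrow> conv G a b z = 0"
  by (simp add: conv_def)

lemma conv_add_left: "conv G (a1 + a2) b = conv G a1 b + conv G a2 b"
  by (auto simp: fun_eq_iff conv_def distrib_right sum.distrib)

lemma conv_add_right: "conv G a (b1 + b2) = conv G a b1 + conv G a b2"
  by (auto simp: fun_eq_iff conv_def distrib_left sum.distrib)

lemma conv_scale_left: "conv G (\<lambda>g. c * a g) b = (\<lambda>g. c * conv G a b g)"
  by (auto simp: fun_eq_iff conv_def sum_distrib_left mult.assoc)

lemma conv_scale_right: "conv G a (\<lambda>g. c * b g) = (\<lambda>g. c * conv G a b g)"
  by (auto simp: fun_eq_iff conv_def sum_distrib_left mult.left_commute)

lemma conv_zero_left [simp]: "conv G 0 b = 0"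
  by (simp add: fun_eq_iff conv_def)

lemma conv_zero_right [simp]: "conv G a 0 = 0"
  by (simp add: fun_eq_iff conv_def)

lemma conv_assoc: "conv G (conv G a b) c = conv G a (conv G b c)"
proof
  fix z show "conv G (conv G a b) c z = conv G a (conv G b c) z"
  proof (cases "z \<in> C")
    case True
    have shift: "(\<Sum>h\<in>C. b (inv k \<otimes> h) * c (inv h \<otimes> z)) = (\<Sum>m\<in>C. b m * c (inv m \<otimes> (inv k \<otimes> z)))"
      if k: "k \<in> C" for k
      using sum_reindex_mult_left[OF k, of "\<lambda>h. b (inv k \<otimes> h) * c (inv h \<otimes> z)"] k True
      by (simp add: inv_mult_group m_assoc)
    have "conv G (conv G a b) c z = (\<Sum>h\<in>C. \<Sum>k\<in>C. a k * b (inv k \<otimes> h) * c (inv h \<otimes> z))"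
      using True by (simp add: conv_eq sum_distrib_right)
    also have "\<dots> = (\<Sum>k\<in>C. a k * (\<Sum>h\<in>C. b (inv k \<otimes> h) * c (inv h \<otimes> z)))"
      by (subst sum.swap) (simp add: sum_distrib_left mult.assoc)
    also have "\<dots> = conv G a (conv G b c) z"
      using True by (simp add: conv_eq shift)
    finally show ?thesis .
  qed (simp add: conv_outside)
qed

lemma conv_delta_left: "z \<in> C \<Longrightarrow> h \<in> C \<Longrightarrow> conv G (delta h) a z = a (inv h \<otimes> z)"
  by (simp add: conv_eq delta_def if_distrib[of "\<lambda>t. t * _"] cong: if_cong)

lemma conv_delta_right: "z \<in> C \<Longrightarrow> h \<in> C \<Longrightarrow> conv G a (delta h) z = a (z \<otimes> inv h)"
proof -
  assume z: "z \<in> C" and h: "h \<in> C"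
  have "conv G a (delta h) z = (\<Sum>k\<in>C. if k = z \<otimes> inv h then a k else 0)"
    unfolding conv_eq[OF z] using z h by (intro sum.cong) (auto simp: delta_def inv_solve_left' m_assoc)
  then show ?thesis using z h by simp
qed

lemma conv_delta_one_left:
  assumes "supp_in G a" shows "conv G (delta \<one>) a = a"
proof
  fix z show "conv G (delta \<one>) a z = a z"
    using assms by (cases "z \<in> C") (simp_all add: conv_delta_left conv_outside supp_in_def)
qed

lemma conv_delta_one_right:
  assumes "supp_in G a" shows "conv G a (delta \<one>) = a"
proof
  fix z show "conv G a (delta \<one>) z = a z"
    using assms by (cases "z \<in> C") (simp_all add: conv_delta_right conv_outside supp_in_def)
qed

lemma class_function_delta_one: "class_function (delta \<one>)"
  by (auto simp: class_function_def supp_in_def delta_def)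
    (metis conjg_inv_conjg conjg_one_right inv_closed one_closed)

lemma class_function_conv_commute:
  assumes "class_function a" shows "conv G a x = conv G x a"
proof
  fix z show "conv G a x z = conv G x a z"
  proof (cases "z \<in> C")
    case True
    have "a (z \<otimes> inv m) = a (inv m \<otimes> z)" if m: "m \<in> C" for m
      using class_functionD[OF assms, of "inv m" "z \<otimes> inv m"] m True by (simp add: conjg_def m_assoc)
    then have "conv G a x z = (\<Sum>m\<in>C. x m * a (inv m \<otimes> z))"
      using True sum_reindex_inv[of "\<lambda>m. a (z \<otimes> m) * x (inv (z \<otimes> m) \<otimes> z)"]
        sum_reindex_mult_left[OF True, of "\<lambda>h. a h * x (inv h \<otimes> z)"]
      by (simp add: conv_eq inv_mult_group m_assoc mult.commute)
    then show ?thesis using True by (simp add: conv_eq)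
  qed (simp add: conv_outside)
qed

lemma class_function_conv:
  assumes a: "class_function a" and b: "class_function b" shows "class_function (conv G a b)"
  unfolding class_function_def
proof (intro conjI ballI)
  show "supp_in G (conv G a b)" by (simp add: supp_in_def conv_outside)
  fix h x assume h: "h \<in> C" and x: "x \<in> C"
  have "conv G a b (conjg h x) = (\<Sum>m\<in>C. a (conjg h m) * b (inv (conjg h m) \<otimes> conjg h x))"
    using sum_reindex_conjg[OF h, of "\<lambda>m. a m * b (inv m \<otimes> conjg h x)"] h x by (simp add: conv_eq)
  also have "\<dots> = conv G a b x"
    using a b h x by (simp add: conv_eq class_functionD inv_conjg conjg_mult[symmetric])
  finally show "conv G a b (conjg h x) = conv G a b x" .
qed

lemma centerA_eq: "centerA G = {a. class_function a}"
proof safe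
  fix a assume "class_function a" then show "a \<in> centerA G"
    unfolding centerA_def using class_function_conv_commute by (auto simp: class_function_def)
next
  fix a assume a: "a \<in> centerA G"
  show "class_function a" unfolding class_function_def
  proof (intro conjI ballI)
    show "supp_in G a" using a by (simp add: centerA_def)
    fix h x assume h: "h \<in> C" and x: "x \<in> C"
    have "conv G a (delta h) (h \<otimes> x) = conv G (delta h) a (h \<otimes> x)"
      using a h by (simp add: centerA_def supp_in_def delta_def)
    then show "a (conjg h x) = a x"
      using h x by (simp add: conv_delta_right conv_delta_left conjg_def)
  qed
qed

lemma star_fun_conv: "star_fun (conv G a b) = conv G (star_fun b) (star_fun a)"
proof
  fix z show "star_fun (conv G a b) z = conv G (star_fun b) (star_fun a) z"
  proof (cases "z \<in> C")
    case True
    have "conv G (star_fun b) (star_fun a) z = (\<Sum>k\<in>C. star_fun b (z \<otimes> k) * star_fun a (inv (z \<otimes> k) \<otimes> z))"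
      using sum_reindex_mult_left[OF True, of "\<lambda>h. star_fun b h * star_fun a (inv h \<otimes> z)"] True
      by (simp add: conv_eq)
    also have "\<dots> = (\<Sum>k\<in>C. a k * b (inv k \<otimes> inv z))"
      using True by (intro sum.cong refl) (simp add: star_fun_def inv_mult_group m_assoc mult.commute)
    finally show ?thesis using True by (simp add: star_fun_def conv_eq)
  qed (simp add: star_fun_def conv_outside)
qed

lemma star_fun_star_fun: "supp_in G a \<Longrightarrow> star_fun (star_fun a) = a"
  by (auto simp: star_fun_def fun_eq_iff supp_in_def)

lemma class_function_star_fun: "class_function a \<Longrightarrow> class_function (star_fun a)"
  by (simp add: class_function_def supp_in_def star_fun_def inv_conjg)

lemma conv_one_commute: "conv G a b \<one> = conv G b a \<one>"
  using sum_reindex_inv[of "\<lambda>h. a h * b (inv h)"] by (simp add: conv_eq mult.commute)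

section \<open>Matrices and the map V\<close>

definition trace :: "('a \<Rightarrow> 'a \<Rightarrow> complex) \<Rightarrow> complex" where
  "trace b = (\<Sum>u\<in>C. b u u)"

definition id_mat :: "'a \<Rightarrow> 'a \<Rightarrow> complex" where
  "id_mat = (\<lambda>y x. if y \<in> C \<and> x \<in> C \<and> y = x then 1 else 0)"

lemma mmul_assoc: "mmul G (mmul G b1 b2) b3 = mmul G b1 (mmul G b2 b3)"
proof (intro ext)
  fix x y
  have "mmul G (mmul G b1 b2) b3 x y = (\<Sum>z\<in>C. \<Sum>w\<in>C. b1 x w * b2 w z * b3 z y)"
    by (simp add: mmul_def sum_distrib_right)
  also have "\<dots> = mmul G b1 (mmul G b2 b3) x y"
    by (subst sum.swap) (simp add: mmul_def sum_distrib_left mult.assoc)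
  finally show "mmul G (mmul G b1 b2) b3 x y = mmul G b1 (mmul G b2 b3) x y" .
qed

lemma mmul_add_left: "mmul G (b1 + b2) b = mmul G b1 b + mmul G b2 b"
  by (simp add: fun_eq_iff mmul_def distrib_right sum.distrib)

lemma mmul_add_right: "mmul G b (b1 + b2) = mmul G b b1 + mmul G b b2"
  by (simp add: fun_eq_iff mmul_def distrib_left sum.distrib)

lemma mmul_scale_left: "mmul G (\<lambda>u v. c * b1 u v) b = (\<lambda>u v. c * mmul G b1 b u v)"
  by (simp add: fun_eq_iff mmul_def sum_distrib_left mult.assoc)

lemma mmul_scale_right: "mmul G b (\<lambda>u v. c * b1 u v) = (\<lambda>u v. c * mmul G b b1 u v)"
  by (simp add: fun_eq_iff mmul_def sum_distrib_left mult.left_commute)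

lemma mmul_zero_left [simp]: "mmul G 0 b = 0"
  by (simp add: fun_eq_iff mmul_def)

lemma mmul_zero_right [simp]: "mmul G b 0 = 0"
  by (simp add: fun_eq_iff mmul_def)

lemma trace_mmul_commute: "trace (mmul G b1 b2) = trace (mmul G b2 b1)"
  unfolding trace_def mmul_def by (subst sum.swap) (simp add: mult.commute)

lemma trace_add: "trace (b1 + b2) = trace b1 + trace b2"
  by (simp add: trace_def sum.distrib)

lemma Vmat_eq: "y \<in> C \<Longrightarrow> x \<in> C \<Longrightarrow> Vmat G a y x = (\<Sum>g\<in>C. a g * (if y = conjg g x then 1 else 0))"
  by (simp add: Vmat_def conjg_def)

lemma Vmat_outside: "y \<notin> C \<or> x \<notin> C \<Longrightarrow> Vmat G a y x = 0"
  by (auto simp: Vmat_def)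

lemma Vmat_zero [simp]: "Vmat G 0 = 0"
  by (simp add: fun_eq_iff Vmat_def)

lemma Vmat_add: "Vmat G (a1 + a2) = Vmat G a1 + Vmat G a2"
  by (simp add: fun_eq_iff Vmat_def distrib_right sum.distrib)

lemma Vmat_scale: "Vmat G (\<lambda>g. c * a g) = (\<lambda>u v. c * Vmat G a u v)"
  by (simp add: fun_eq_iff Vmat_def sum_distrib_left mult.assoc)

lemma Vmat_mmul_left:
  assumes y: "y \<in> C" shows "mmul G (Vmat G a) b y x = (\<Sum>g\<in>C. a g * b (conjg (inv g) y) x)"
proof -
  have "mmul G (Vmat G a) b y x = (\<Sum>g\<in>C. \<Sum>z\<in>C. if z = conjg (inv g) y then a g * b z x else 0)"
    using y by (subst sum.swap) (auto simp: mmul_def Vmat_eq sum_distrib_right conjg_eq_iff[of _ _ y]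
        intro!: sum.cong)
  then show ?thesis using y by simp
qed

lemma Vmat_mmul_left_outside: "y \<notin> C \<Longrightarrow> mmul G (Vmat G a) b y x = 0"
  by (simp add: mmul_def Vmat_outside)

lemma Vmat_mmul_right:
  assumes x: "x \<in> C" shows "mmul G b (Vmat G a) y x = (\<Sum>g\<in>C. a g * b y (conjg g x))"
proof -
  have "mmul G b (Vmat G a) y x = (\<Sum>g\<in>C. \<Sum>z\<in>C. if z = conjg g x then a g * b y z else 0)"
    using x by (subst sum.swap) (auto simp: mmul_def Vmat_eq sum_distrib_left intro!: sum.cong)
  then show ?thesis using x by simp
qed

lemma Vmat_mmul_right_outside: "x \<notin> C \<Longrightarrow> mmul G b (Vmat G a) y x = 0"
  by (simp add: mmul_def Vmat_outside)

lemma Vmat_conjg_inv: assumes g: "g \<in> C" and "y \<in> C" "x \<in> C"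
  shows "Vmat G b (conjg (inv g) y) x = (\<Sum>m\<in>C. b (inv g \<otimes> m) * (if y = conjg m x then 1 else 0))"
proof -
  have "(conjg (inv g) y = conjg k x) = (y = conjg (g \<otimes> k) x)" if "k \<in> C" for k
    using assms that by (metis conjg_conjg conjg_conjg_inv conjg_inv_conjg conjg_closed inv_closed)
  then have "Vmat G b (conjg (inv g) y) x = (\<Sum>k\<in>C. b k * (if y = conjg (g \<otimes> k) x then 1 else 0))"
    using assms by (simp add: Vmat_eq)
  then show ?thesis
    using sum_reindex_mult_left[OF g, of "\<lambda>m. b (inv g \<otimes> m) * (if y = conjg m x then 1 else 0)"] g
    by simp
qed

lemma Vmat_conv: "Vmat G (conv G a b) = mmul G (Vmat G a) (Vmat G b)"
proof (intro ext)
  fix y x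
  show "Vmat G (conv G a b) y x = mmul G (Vmat G a) (Vmat G b) y x"
  proof (cases "y \<in> C \<and> x \<in> C")
    case True
    have "Vmat G (conv G a b) y x
        = (\<Sum>g\<in>C. a g * (\<Sum>m\<in>C. b (inv g \<otimes> m) * (if y = conjg m x then 1 else 0)))"
      using True by (simp add: Vmat_eq conv_eq sum_distrib_left sum_distrib_right mult.assoc)
        (rule sum.swap)
    then show ?thesis
      using True by (simp add: Vmat_mmul_left Vmat_conjg_inv)
  qed (auto simp: Vmat_outside Vmat_mmul_left_outside mmul_def)
qed

lemma Vmat_delta_one: "Vmat G (delta \<one>) = id_mat"
  by (auto simp: fun_eq_iff Vmat_def delta_def id_mat_def if_distrib[of "\<lambda>t. t * _"] cong: if_cong)

lemma mmul_id_mat_left: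
  assumes "\<And>y x. y \<notin> C \<Longrightarrow> b y x = 0" shows "mmul G id_mat b = b"
proof (intro ext)
  fix y x
  have "mmul G id_mat b y x = (\<Sum>z\<in>C. if z = y then b z x else 0)"
    unfolding mmul_def id_mat_def by (rule sum.cong) auto
  then show "mmul G id_mat b y x = b y x" using assms by (cases "y \<in> C") auto
qed

lemma mmul_id_mat_right:
  assumes "\<And>y x. x \<notin> C \<Longrightarrow> b y x = 0" shows "mmul G b id_mat = b"
proof (intro ext)
  fix y x
  have "mmul G b id_mat y x = (\<Sum>z\<in>C. if z = x then b y z else 0)"
    unfolding mmul_def id_mat_def by (rule sum.cong) auto
  then show "mmul G b id_mat y x = b y x" using assms by (cases "x \<in> C") auto
qed

lemma Vmat_star_fun: "Vmat G (star_fun a) y x = Vmat G a x y"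
proof (cases "y \<in> C \<and> x \<in> C")
  case True
  then show ?thesis
    using sum_reindex_inv[of "\<lambda>g. a (inv g) * (if y = conjg g x then 1 else 0)"]
    by (auto simp: Vmat_eq star_fun_def conjg_eq_iff[of "inv _" x y] intro!: sum.cong)
qed (auto simp: Vmat_outside)

section \<open>Invariant matrices and the space B\<close>

definition involutions :: "'a set" where
  "involutions = {x \<in> C. x \<otimes> x = \<one>}"

definition invariant_matrix :: "('a \<Rightarrow> 'a \<Rightarrow> complex) \<Rightarrow> bool" where
  "invariant_matrix b \<longleftrightarrow> (\<forall>u v. u \<notin> involutions \<or> v \<notin> involutions \<longrightarrow> b u v = 0) \<and>
     (\<forall>h\<in>C. \<forall>u\<in>C. \<forall>v\<in>C. b (conjg h u) (conjg h v) = b u v)"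

lemma involutions_subset: "involutions \<subseteq> C"
  by (auto simp: involutions_def)

lemma finite_involutions [simp]: "finite involutions"
  using involutions_subset by (rule finite_subset) simp

lemma conjg_in_involutions_iff [simp]:
  assumes "h \<in> C" "x \<in> C" shows "conjg h x \<in> involutions \<longleftrightarrow> x \<in> involutions"
proof -
  have "conjg h x \<otimes> conjg h x = conjg h (x \<otimes> x)" using assms by (simp add: conjg_mult)
  then show ?thesis
    using assms conjg_inj_iff[of h "x \<otimes> x" \<one>] by (simp add: involutions_def)
qed

lemma invariant_matrixI:
  assumes "\<And>u v. u \<notin> involutions \<or> v \<notin> involutions \<Longrightarrow> b u v = 0"
    and "\<And>h u v. h \<in> C \<Longrightarrow> u \<in> C \<Longrightarrow> v \<in> C \<Longrightarrow> b (conjg h u) (conjg h v) = b u v"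
  shows "invariant_matrix b"
  using assms by (simp add: invariant_matrix_def)

lemma invariant_matrix_outside: "invariant_matrix b \<Longrightarrow> u \<notin> involutions \<or> v \<notin> involutions \<Longrightarrow> b u v = 0"
  by (simp add: invariant_matrix_def)

lemma invariant_matrix_outside_carrier:
  assumes "invariant_matrix b" "u \<notin> C \<or> v \<notin> C" shows "b u v = 0"
  using assms(2) involutions_subset by (intro invariant_matrix_outside[OF assms(1)]) auto

lemma invariant_matrix_conjg:
  "invariant_matrix b \<Longrightarrow> h \<in> C \<Longrightarrow> u \<in> C \<Longrightarrow> v \<in> C \<Longrightarrow> b (conjg h u) (conjg h v) = b u v"
  by (simp add: invariant_matrix_def)

lemma invariant_matrix_zero: "invariant_matrix 0"
  by (simp add: invariant_matrix_def)

lemma invariant_matrix_add: "invariant_matrix b1 \<Longrightarrow> invariant_matrix b2 \<Longrightarrow> invariant_matrix (b1 + b2)"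
  by (simp add: invariant_matrix_def)

lemma invariant_matrix_scale: "invariant_matrix b \<Longrightarrow> invariant_matrix (\<lambda>u v. c * b u v)"
  by (simp add: invariant_matrix_def)

lemma invariant_matrix_transpose: "invariant_matrix b \<Longrightarrow> invariant_matrix (\<lambda>u v. b v u)"
  by (rule invariant_matrixI) (auto simp: invariant_matrix_outside invariant_matrix_conjg)

lemma invariant_matrix_mmul:
  assumes b1: "invariant_matrix b1" and b2: "invariant_matrix b2" shows "invariant_matrix (mmul G b1 b2)"
proof (rule invariant_matrixI)
  fix u v assume "u \<notin> involutions \<or> v \<notin> involutions"
  then show "mmul G b1 b2 u v = 0"
    using invariant_matrix_outside[OF b1] invariant_matrix_outside[OF b2] by (auto simp: mmul_def)
next
  fix h u v assume h: "h \<in> C" and u: "u \<in> C" and v: "v \<in> C"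
  show "mmul G b1 b2 (conjg h u) (conjg h v) = mmul G b1 b2 u v"
    using sum_reindex_conjg[OF h, of "\<lambda>z. b1 (conjg h u) z * b2 z (conjg h v)"] h u v
    by (simp add: mmul_def invariant_matrix_conjg[OF b1] invariant_matrix_conjg[OF b2])
qed

lemma Vmat_mmul_commute:
  assumes b: "invariant_matrix b" shows "mmul G (Vmat G a) b = mmul G b (Vmat G a)"
proof (intro ext)
  fix y x
  show "mmul G (Vmat G a) b y x = mmul G b (Vmat G a) y x"
  proof (cases "y \<in> C \<and> x \<in> C")
    case True
    have "b (conjg (inv g) y) x = b y (conjg g x)" if "g \<in> C" for g
      using invariant_matrix_conjg[OF b that, of "conjg (inv g) y" x] that True by simp
    then show ?thesis using True by (simp add: Vmat_mmul_left Vmat_mmul_right)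
  next
    case False
    then show ?thesis
      by (cases "y \<in> C"; cases "x \<in> C")
        (simp_all add: Vmat_mmul_left Vmat_mmul_right Vmat_mmul_left_outside Vmat_mmul_right_outside
          invariant_matrix_outside_carrier[OF b])
  qed
qed

lemma invariant_matrix_Vmat_mmul:
  assumes a: "class_function a" and b: "invariant_matrix b"
  shows "invariant_matrix (mmul G (Vmat G a) b)"
proof (rule invariant_matrixI)
  fix u v assume uv: "u \<notin> involutions \<or> v \<notin> involutions"
  show "mmul G (Vmat G a) b u v = 0"
  proof (cases "u \<in> C")
    case True
    then have "b (conjg (inv g) u) v = 0" if "g \<in> C" for g
      using uv that invariant_matrix_outside[OF b] by simp
    then show ?thesis using True by (simp add: Vmat_mmul_left)
  qed (simp add: Vmat_mmul_left_outside)
next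
  fix h u v assume h: "h \<in> C" and u: "u \<in> C" and v: "v \<in> C"
  have "mmul G (Vmat G a) b (conjg h u) (conjg h v)
      = (\<Sum>g\<in>C. a (conjg h g) * b (conjg (inv (conjg h g)) (conjg h u)) (conjg h v))"
    using h u sum_reindex_conjg[OF h, of "\<lambda>g. a g * b (conjg (inv g) (conjg h u)) (conjg h v)"]
    by (simp add: Vmat_mmul_left)
  also have "\<dots> = mmul G (Vmat G a) b u v"
    using a b h u v
    by (simp add: Vmat_mmul_left inv_conjg conjg_conjg_conjg class_functionD invariant_matrix_conjg)
  finally show "mmul G (Vmat G a) b (conjg h u) (conjg h v) = mmul G (Vmat G a) b u v" .
qed

lemma invariant_matrix_mmul_Vmat:
  assumes "class_function a" "invariant_matrix b" shows "invariant_matrix (mmul G b (Vmat G a))"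
  using invariant_matrix_Vmat_mmul[OF assms] Vmat_mmul_commute[OF assms(2)] by simp

lemma pair_class_eq: "pair_class G (u, v) = {(conjg h u, conjg h v) | h. h \<in> C}"
  by (simp add: pair_class_def conjg_def)

lemma betas_eq: "betas G = {pair_class G (u, v) | u v. u \<in> involutions \<and> v \<in> involutions}"
  by (auto simp: betas_def involutions_def)

lemma mem_pair_class_self: "u \<in> C \<Longrightarrow> v \<in> C \<Longrightarrow> (u, v) \<in> pair_class G (u, v)"
  by (auto simp: pair_class_eq intro!: exI[of _ \<one>])

lemma mem_pair_class_iff:
  assumes "u \<in> C" "v \<in> C" "x \<in> C" "y \<in> C"
  shows "(x, y) \<in> pair_class G (u, v) \<longleftrightarrow> pair_class G (x, y) = pair_class G (u, v)"
proof
  assume "(x, y) \<in> pair_class G (u, v)"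
  then obtain k where k: "k \<in> C" "x = conjg k u" "y = conjg k v" by (auto simp: pair_class_eq)
  have "conjg h x = conjg (h \<otimes> k) u" "conjg h y = conjg (h \<otimes> k) v"
    "conjg h u = conjg (h \<otimes> inv k) x" "conjg h v = conjg (h \<otimes> inv k) y" if "h \<in> C" for h
    using that k assms by (simp_all add: conjg_conjg m_assoc)
  then show "pair_class G (x, y) = pair_class G (u, v)"
    using k unfolding pair_class_eq by (blast intro: m_closed inv_closed)
next
  assume "pair_class G (x, y) = pair_class G (u, v)"
  then show "(x, y) \<in> pair_class G (u, v)" using mem_pair_class_self[of x y] assms by simp
qed

lemma pair_class_subset:
  assumes "\<beta> \<in> betas G" shows "\<beta> \<subseteq> involutions \<times> involutions"
  using assms involutions_subset by (auto simp: betas_eq pair_class_eq)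

lemma finite_betas: "finite (betas G)"
proof -
  have "betas G \<subseteq> Pow (involutions \<times> involutions)"
    using pair_class_subset by blast
  then show ?thesis by (rule finite_subset) simp
qed

lemma E_beta_conjg:
  assumes "\<beta> \<in> betas G" "h \<in> C" "u \<in> C" "v \<in> C"
  shows "E_beta \<beta> (conjg h u) (conjg h v) = E_beta \<beta> u v"
proof -
  obtain s1 s2 where s: "s1 \<in> C" "s2 \<in> C" "\<beta> = pair_class G (s1, s2)"
    using assms(1) involutions_subset by (auto simp: betas_eq)
  have "pair_class G (conjg h u, conjg h v) = pair_class G (u, v)"
    using assms mem_pair_class_iff[of u v "conjg h u" "conjg h v"] by (auto simp: pair_class_eq)
  then have "(conjg h u, conjg h v) \<in> \<beta> \<longleftrightarrow> (u, v) \<in> \<beta>"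
    using s assms mem_pair_class_iff[of s1 s2] by simp
  then show ?thesis by (simp add: E_beta_def)
qed

lemma invariant_matrix_E_beta:
  assumes "\<beta> \<in> betas G" shows "invariant_matrix (E_beta \<beta>)"
proof (rule invariant_matrixI)
  fix u v assume "u \<notin> involutions \<or> v \<notin> involutions"
  then show "E_beta \<beta> u v = 0" using pair_class_subset[OF assms] by (auto simp: E_beta_def)
qed (rule E_beta_conjg[OF assms])

lemma invariant_matrix_expansion:
  assumes b: "invariant_matrix b"
  shows "b = (\<lambda>x y. \<Sum>\<beta>\<in>betas G. b (fst (SOME p. p \<in> \<beta>)) (snd (SOME p. p \<in> \<beta>)) * E_beta \<beta> x y)"
proof (intro ext)
  fix x y
  show "b x y = (\<Sum>\<beta>\<in>betas G. b (fst (SOME p. p \<in> \<beta>)) (snd (SOME p. p \<in> \<beta>)) * E_beta \<beta> x y)"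
  proof (cases "x \<in> involutions \<and> y \<in> involutions")
    case True
    then have xy: "x \<in> C" "y \<in> C" using involutions_subset by auto
    let ?\<beta> = "pair_class G (x, y)"
    have "E_beta \<beta> x y = (if \<beta> = ?\<beta> then 1 else 0)" if "\<beta> \<in> betas G" for \<beta>
      using that xy mem_pair_class_iff by (auto simp: betas_eq E_beta_def involutions_def)
    then have "(\<Sum>\<beta>\<in>betas G. b (fst (SOME p. p \<in> \<beta>)) (snd (SOME p. p \<in> \<beta>)) * E_beta \<beta> x y)
        = (\<Sum>\<beta>\<in>betas G. if \<beta> = ?\<beta> then b (fst (SOME p. p \<in> \<beta>)) (snd (SOME p. p \<in> \<beta>)) else 0)"
      by (intro sum.cong) auto
    moreover have "?\<beta> \<in> betas G" using True by (auto simp: betas_eq)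
    moreover have "b (fst (SOME p. p \<in> ?\<beta>)) (snd (SOME p. p \<in> ?\<beta>)) = b x y"
    proof -
      have "(SOME p. p \<in> ?\<beta>) \<in> ?\<beta>" using mem_pair_class_self[OF xy] by (rule someI)
      then obtain h where "h \<in> C" "(SOME p. p \<in> ?\<beta>) = (conjg h x, conjg h y)"
        by (auto simp: pair_class_eq)
      then show ?thesis using invariant_matrix_conjg[OF b _ xy] by simp
    qed
    ultimately show ?thesis using finite_betas by simp
  next
    case False
    then have "E_beta \<beta> x y = 0" if "\<beta> \<in> betas G" for \<beta>
      using pair_class_subset[OF that] by (auto simp: E_beta_def)
    then show ?thesis using False invariant_matrix_outside[OF b] by simp
  qed
qed

lemma spanB_eq: "spanB G = {b. invariant_matrix b}"
proof safe
  fix b assume "b \<in> spanB G"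
  then obtain c where b: "b = (\<lambda>x y. \<Sum>\<beta>\<in>betas G. c \<beta> * E_beta \<beta> x y)" by (auto simp: spanB_def)
  show "invariant_matrix b"
    unfolding b using invariant_matrix_E_beta
    by (intro invariant_matrixI)
      (auto simp: invariant_matrix_outside invariant_matrix_conjg intro!: sum.neutral sum.cong)
next
  fix b assume "invariant_matrix b"
  then show "b \<in> spanB G"
    unfolding spanB_def by (subst invariant_matrix_expansion) auto
qed

section \<open>The algebra H, its involution and its form\<close>

definition H_carrier :: "('a Hel) set" where
  "H_carrier = {x. class_function (fst x) \<and> invariant_matrix (snd x)}"

lemma HA_eq: "HA G = {x. class_function (fst x) \<and> snd x = 0}"
  by (auto simp: HA_def centerA_eq)

lemma HB_eq: "HB G = {x. fst x = 0 \<and> invariant_matrix (snd x)}"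
  by (auto simp: HB_def spanB_eq)

lemma HA_subset: "HA G \<subseteq> H_carrier"
  by (auto simp: HA_eq H_carrier_def invariant_matrix_zero)

lemma HB_subset: "HB G \<subseteq> H_carrier"
  by (auto simp: HB_eq H_carrier_def class_function_zero)

lemma direct_sum_eq: "direct_sum (HA G) (HB G) = H_carrier"
proof safe
  fix x assume "x \<in> direct_sum (HA G) (HB G)"
  then show "x \<in> H_carrier" by (auto simp: direct_sum_def HA_eq HB_eq H_carrier_def)
next
  fix a b assume "(a, b) \<in> H_carrier"
  then have "(a, b) = (a, 0) + (0, b)" "(a, 0) \<in> HA G" "(0, b) \<in> HB G"
    by (auto simp: H_carrier_def HA_eq HB_eq)
  then show "(a, b) \<in> direct_sum (HA G) (HB G)" unfolding direct_sum_def by blast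
qed

lemma subspace_HA: "module.subspace scaleH (HA G)"
proof -
  interpret V: vector_space scaleH by (rule vector_space_scaleH)
  show ?thesis
    unfolding V.subspace_def by (auto simp: HA_eq class_function_def supp_in_def scaleH_def fun_eq_iff)
qed

lemma subspace_HB: "module.subspace scaleH (HB G)"
proof -
  interpret V: vector_space scaleH by (rule vector_space_scaleH)
  show ?thesis
    unfolding V.subspace_def
    by (auto simp: HB_eq invariant_matrix_zero invariant_matrix_add scaleH_def invariant_matrix_scale)
qed

lemma multH_add_left: "multH G (x + y) z = multH G x z + multH G y z"
  by (simp add: multH_def conv_add_left mmul_add_left mmul_add_right Vmat_add add_ac)

lemma multH_add_right: "multH G x (y + z) = multH G x y + multH G x z"
  by (simp add: multH_def conv_add_right mmul_add_left mmul_add_right Vmat_add add_ac)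

lemma multH_scale_left: "multH G (scaleH c x) y = scaleH c (multH G x y)"
  by (simp add: multH_def scaleH_def conv_scale_left mmul_scale_left mmul_scale_right Vmat_scale
      distrib_left fun_eq_iff)

lemma multH_scale_right: "multH G x (scaleH c y) = scaleH c (multH G x y)"
  by (simp add: multH_def scaleH_def conv_scale_right mmul_scale_left mmul_scale_right Vmat_scale
      distrib_left fun_eq_iff)

lemma multH_assoc: "multH G (multH G x y) z = multH G x (multH G y z)"
  by (simp add: multH_def conv_assoc Vmat_conv mmul_add_left mmul_add_right mmul_assoc add_ac)

lemma multH_closed: "x \<in> H_carrier \<Longrightarrow> y \<in> H_carrier \<Longrightarrow> multH G x y \<in> H_carrier"
  by (auto simp: H_carrier_def multH_def class_function_conv
      intro!: invariant_matrix_add invariant_matrix_mmul invariant_matrix_Vmat_mmul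
        invariant_matrix_mmul_Vmat)

lemma multH_HA: "x \<in> HA G \<Longrightarrow> y \<in> HA G \<Longrightarrow> multH G x y = (conv G (fst x) (fst y), 0)"
  by (auto simp: HA_eq multH_def)

lemma multH_HA_closed: "x \<in> HA G \<Longrightarrow> y \<in> HA G \<Longrightarrow> multH G x y \<in> HA G"
  by (auto simp: multH_HA HA_eq class_function_conv)

lemma multH_HA_commute: "x \<in> HA G \<Longrightarrow> y \<in> H_carrier \<Longrightarrow> multH G x y = multH G y x"
  by (auto simp: HA_eq H_carrier_def multH_def class_function_conv_commute Vmat_mmul_commute)

lemma multH_HB_closed:
  "x \<in> HB G \<Longrightarrow> y \<in> H_carrier \<Longrightarrow> multH G x y \<in> HB G"
  "x \<in> HB G \<Longrightarrow> y \<in> H_carrier \<Longrightarrow> multH G y x \<in> HB G"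
  by (auto simp: HB_eq H_carrier_def multH_def class_function_zero
      intro!: invariant_matrix_add invariant_matrix_mmul invariant_matrix_Vmat_mmul
        invariant_matrix_mmul_Vmat)

lemma oneH_eq: "oneH G = (delta \<one>, 0)"
  by (simp add: oneH_def delta_def fun_eq_iff)

lemma oneH_in_HA: "oneH G \<in> HA G"
  by (simp add: oneH_eq HA_eq class_function_delta_one)

lemma multH_oneH:
  assumes "x \<in> H_carrier" shows "multH G (oneH G) x = x" "multH G x (oneH G) = x"
  using assms invariant_matrix_outside_carrier
  by (auto simp: H_carrier_def oneH_eq multH_def conv_delta_one_left conv_delta_one_right
      class_function_def Vmat_delta_one intro!: mmul_id_mat_left mmul_id_mat_right prod_eqI)

lemma starH_eq: "starH G x = (star_fun (fst x), (\<lambda>u v. snd x v u))"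
  by (simp add: starH_def star_fun_def)

lemma starH_add: "starH G (x + y) = starH G x + starH G y"
  by (simp add: starH_def fun_eq_iff)

lemma starH_scale: "starH G (scaleH c x) = scaleH c (starH G x)"
  by (simp add: starH_def scaleH_def fun_eq_iff)

lemma starH_mult: "starH G (multH G x y) = multH G (starH G y) (starH G x)"
proof -
  have "(\<lambda>u v. snd (multH G x y) v u) = snd (multH G (starH G y) (starH G x))"
    by (simp add: multH_def starH_eq Vmat_star_fun fun_eq_iff mmul_def mult.commute add_ac)
  then show ?thesis by (simp add: starH_eq multH_def star_fun_conv)
qed

lemma starH_HA: "x \<in> HA G \<Longrightarrow> starH G x \<in> HA G"
  by (auto simp: HA_eq starH_eq class_function_star_fun fun_eq_iff)

lemma starH_HB: "x \<in> HB G \<Longrightarrow> starH G x \<in> HB G"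
  by (auto simp: HB_eq starH_eq invariant_matrix_transpose fun_eq_iff star_fun_def)

lemma starH_closed: "x \<in> H_carrier \<Longrightarrow> starH G x \<in> H_carrier"
  by (simp add: H_carrier_def starH_eq class_function_star_fun invariant_matrix_transpose)

lemma starH_starH: "x \<in> H_carrier \<Longrightarrow> starH G (starH G x) = x"
  by (cases x) (simp add: H_carrier_def starH_eq star_fun_star_fun class_function_def)

lemma fH_eq: "fH G x = (fst x \<one> + trace (snd x)) / card_G"
  by (simp add: fH_def trace_def)

lemma formH_add_left: "formH G (x + y) z = formH G x z + formH G y z"
  by (simp add: formH_def multH_add_left fH_eq trace_add add_divide_distrib)

lemma formH_add_right: "formH G x (y + z) = formH G x y + formH G x z"
  by (simp add: formH_def multH_add_right fH_eq trace_add add_divide_distrib)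

lemma fH_scale: "fH G (scaleH c x) = c * fH G x"
  by (simp add: fH_eq scaleH_def trace_def sum_distrib_left[symmetric] distrib_left)

lemma formH_scale_left: "formH G (scaleH c x) y = c * formH G x y"
  by (simp add: formH_def multH_scale_left fH_scale)

lemma formH_scale_right: "formH G x (scaleH c y) = c * formH G x y"
  by (simp add: formH_def multH_scale_right fH_scale)

lemma bilinear_form_formH: "bilinear_form scaleH (formH G)"
  by (simp add: bilinear_form_def formH_add_left formH_add_right formH_scale_left formH_scale_right)

lemma formH_commute: "formH G x y = formH G y x"
  by (simp add: formH_def fH_eq multH_def conv_one_commute trace_add trace_mmul_commute add_ac)

lemma formH_starH: "formH G (starH G x) (starH G y) = formH G x y"
proof -
  have "fH G (starH G z) = fH G z" for z
    by (simp add: fH_eq starH_eq star_fun_def trace_def)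
  then show ?thesis
    by (metis formH_def starH_mult formH_commute)
qed

lemma formH_HA_HA: "formH G (a, 0) (w, 0) = conv G a w \<one> / card_G"
  by (simp add: formH_def fH_eq multH_def trace_def)

lemma formH_HB_HB: "formH G (0, b1) (0, b2) = trace (mmul G b1 b2) / card_G"
  by (simp add: formH_def fH_eq multH_def)

lemma formH_HA_HB: "formH G (a, 0) (0, b) = trace (mmul G (Vmat G a) b) / card_G"
  by (simp add: formH_def fH_eq multH_def)

section \<open>Reproducing frames of A and B\<close>

lemma sum_conjg_delta:
  assumes "h \<in> C" "z \<in> C"
  shows "(\<Sum>g\<in>C. if z = conjg h g then f g else 0) = f (conjg (inv h) z)"
proof -
  have "(\<Sum>g\<in>C. if z = conjg h g then f g else 0) = (\<Sum>g\<in>C. if g = conjg (inv h) z then f g else 0)"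
    using assms by (intro sum.cong refl) (simp add: conjg_eq_iff[of h _ z])
  then show ?thesis using assms by simp
qed

definition conj_delta :: "'a \<Rightarrow> 'a \<Rightarrow> complex" where
  "conj_delta g = (\<lambda>z. \<Sum>h\<in>C. if z = conjg h g then 1 else 0)"

definition conj_delta2 :: "'a \<Rightarrow> 'a \<Rightarrow> 'a \<Rightarrow> 'a \<Rightarrow> complex" where
  "conj_delta2 x y = (\<lambda>u v. \<Sum>h\<in>C. if u = conjg h x \<and> v = conjg h y then 1 else 0)"

text \<open>Up to normalisation, \<open>eA g\<close> is \<open>E\<^sub>\<alpha>\<close> for the class \<open>\<alpha>\<close> of \<open>g\<close> and \<open>eB (x, y)\<close> is
  \<open>E\<^sub>\<beta>\<close> for the class \<open>\<beta>\<close> of \<open>(x, y)\<close>.\<close>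

definition eA :: "'a \<Rightarrow> 'a Hel" where "eA g = (conj_delta g, 0)"

definition eB :: "'a \<times> 'a \<Rightarrow> 'a Hel" where "eB p = (0, conj_delta2 (fst p) (snd p))"

definition EA :: "'a \<Rightarrow> 'a \<Rightarrow> complex" where "EA g k = (if k = inv g then 1 / card_G else 0)"

definition EB :: "'a \<times> 'a \<Rightarrow> 'a \<times> 'a \<Rightarrow> complex" where
  "EB p q = (if q = (snd p, fst p) then 1 / card_G else 0)"

lemma class_function_conj_delta:
  assumes g: "g \<in> C" shows "class_function (conj_delta g)"
  unfolding class_function_def
proof (intro conjI ballI)
  show "supp_in G (conj_delta g)" using g by (auto simp: supp_in_def conj_delta_def intro!: sum.neutral)
  fix k z assume k: "k \<in> C" and z: "z \<in> C"
  show "conj_delta g (conjg k z) = conj_delta g z"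
    using sum_reindex_mult_left[OF k, of "\<lambda>h. if conjg k z = conjg h g then 1 else (0::complex)"] k z g
    by (simp add: conj_delta_def conjg_conjg[symmetric])
qed

lemma invariant_matrix_conj_delta2:
  assumes x: "x \<in> involutions" and y: "y \<in> involutions" shows "invariant_matrix (conj_delta2 x y)"
proof (rule invariant_matrixI)
  have xy: "x \<in> C" "y \<in> C" using x y involutions_subset by auto
  fix u v assume "u \<notin> involutions \<or> v \<notin> involutions"
  then show "conj_delta2 x y u v = 0" using x y xy by (auto simp: conj_delta2_def intro!: sum.neutral)
next
  have xy: "x \<in> C" "y \<in> C" using x y involutions_subset by auto
  fix k u v assume k: "k \<in> C" and u: "u \<in> C" and v: "v \<in> C"
  show "conj_delta2 x y (conjg k u) (conjg k v) = conj_delta2 x y u v"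
    using sum_reindex_mult_left[OF k,
        of "\<lambda>h. if conjg k u = conjg h x \<and> conjg k v = conjg h y then 1 else (0::complex)"]
      k u v xy by (simp add: conj_delta2_def conjg_conjg[symmetric])
qed

lemma eA_in_HA: "g \<in> C \<Longrightarrow> eA g \<in> HA G"
  by (simp add: eA_def HA_eq class_function_conj_delta)

lemma eB_in_HB: "p \<in> involutions \<times> involutions \<Longrightarrow> eB p \<in> HB G"
  by (auto simp: eB_def HB_eq invariant_matrix_conj_delta2)

lemma formH_eA_HA:
  assumes k: "k \<in> C" and w: "class_function w" shows "formH G (eA k) (w, 0) = w (inv k)"
proof -
  have "conv G (conj_delta k) w \<one> = (\<Sum>h\<in>C. \<Sum>m\<in>C. if m = conjg h k then w (inv m) else 0)"
    by (subst sum.swap) (auto simp: conv_eq conj_delta_def sum_distrib_right intro!: sum.cong)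
  also have "\<dots> = (\<Sum>h\<in>C. w (inv k))"
    using k w by (intro sum.cong refl) (simp add: inv_conjg class_functionD)
  finally show ?thesis using card_G_nonzero by (simp add: eA_def formH_HA_HA)
qed

lemma trace_conj_delta2_mmul:
  assumes xy: "x \<in> C" "y \<in> C" and b: "invariant_matrix b"
  shows "trace (mmul G (conj_delta2 x y) b) = card_G * b y x"
proof -
  have "trace (mmul G (conj_delta2 x y) b)
      = (\<Sum>u\<in>C. \<Sum>z\<in>C. \<Sum>h\<in>C. if u = conjg h x \<and> z = conjg h y then b z u else 0)"
    by (simp add: trace_def mmul_def conj_delta2_def sum_distrib_right if_distrib[of "\<lambda>t. t * _"]
        cong: if_cong)
  also have "\<dots> = (\<Sum>h\<in>C. \<Sum>u\<in>C. \<Sum>z\<in>C. if u = conjg h x \<and> z = conjg h y then b z u else 0)"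
    by (rule sum_swap_inner_outer)
  also have "\<dots> = (\<Sum>h\<in>C. b y x)"
    using xy by (intro sum.cong refl) (simp add: sum_delta_pair invariant_matrix_conjg[OF b])
  finally show ?thesis by simp
qed

lemma formH_eB_HB:
  assumes "x \<in> involutions" "y \<in> involutions" and "invariant_matrix b"
  shows "formH G (eB (x, y)) (0, b) = b y x"
proof -
  have "x \<in> C" "y \<in> C" using assms(1,2) involutions_subset by auto
  then show ?thesis using assms(3) by (simp add: eB_def formH_HB_HB trace_conj_delta2_mmul)
qed

lemma sum_class_function_conj_delta:
  assumes a: "class_function a" shows "(\<Sum>g\<in>C. a g * conj_delta g z) = card_G * a z"
proof (cases "z \<in> C")
  case True
  have "(\<Sum>g\<in>C. a g * conj_delta g z) = (\<Sum>h\<in>C. \<Sum>g\<in>C. if z = conjg h g then a g else 0)"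
    by (subst sum.swap) (auto simp: conj_delta_def sum_distrib_left intro!: sum.cong)
  also have "\<dots> = (\<Sum>h\<in>C. a z)"
    using a True by (intro sum.cong refl) (simp add: sum_conjg_delta class_functionD)
  finally show ?thesis by simp
next
  case False
  then show ?thesis
    using a by (auto simp: conj_delta_def class_function_outside intro!: sum.neutral)
qed

lemma sum_invariant_matrix_conj_delta2:
  assumes b: "invariant_matrix b"
  shows "(\<Sum>x\<in>involutions. \<Sum>y\<in>involutions. b x y * conj_delta2 x y u v) = card_G * b u v"
proof (cases "u \<in> involutions \<and> v \<in> involutions")
  case True
  then have uv: "u \<in> C" "v \<in> C" using involutions_subset by auto
  have "(\<Sum>x\<in>involutions. \<Sum>y\<in>involutions. b x y * conj_delta2 x y u v)
      = (\<Sum>x\<in>involutions. \<Sum>y\<in>involutions. \<Sum>h\<in>C. if u = conjg h x \<and> v = conjg h y then b x y else 0)"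
    by (simp add: conj_delta2_def sum_distrib_left if_distrib[of "\<lambda>t. _ * t"] cong: if_cong)
  also have "\<dots> = (\<Sum>h\<in>C. \<Sum>x\<in>involutions. \<Sum>y\<in>involutions.
      if x = conjg (inv h) u \<and> y = conjg (inv h) v then b x y else 0)"
    using uv involutions_subset conjg_eq_iff[of _ _ u] conjg_eq_iff[of _ _ v]
    by (subst sum_swap_inner_outer) (intro sum.cong refl, auto)
  also have "\<dots> = (\<Sum>h\<in>C. b u v)"
    using True uv by (intro sum.cong refl) (simp add: sum_delta_pair invariant_matrix_conjg[OF b])
  finally show ?thesis by simp
next
  case False
  have "conj_delta2 x y u v = 0" if "x \<in> involutions" "y \<in> involutions" for x y
  proof -
    have "x \<in> C" "y \<in> C" using that involutions_subset by auto
    then show ?thesis using that False by (auto simp: conj_delta2_def intro!: sum.neutral)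
  qed
  then show ?thesis using False invariant_matrix_outside[OF b] by simp
qed

lemma reproducing_frame_HA: "reproducing_frame scaleH (formH G) (HA G) C eA EA"
  unfolding reproducing_frame_def
proof (intro conjI ballI)
  show "finite C" "eA ` C \<subseteq> HA G" using eA_in_HA by auto
  fix w assume "w \<in> HA G"
  then obtain a where w: "w = (a, 0)" and a: "class_function a" by (cases w) (auto simp: HA_eq)
  have "(\<Sum>k\<in>C. EA g k * formH G (eA k) w) = a g / card_G" if "g \<in> C" for g
    using that a by (simp add: EA_def w formH_eA_HA if_distrib[of "\<lambda>t. t * _"] cong: if_cong)
  then have "(\<Sum>g\<in>C. scaleH (\<Sum>k\<in>C. EA g k * formH G (eA k) w) (eA g))
      = (\<Sum>g\<in>C. scaleH (a g / card_G) (eA g))"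
    by (intro sum.cong) auto
  also have "\<dots> = w"
    using sum_class_function_conj_delta[OF a]
    by (simp add: w fst_sum snd_sum sum_fun_apply scaleH_def eA_def sum_divide_distrib[symmetric]
        fun_eq_iff prod_eq_iff)
  finally show "w = (\<Sum>g\<in>C. scaleH (\<Sum>k\<in>C. EA g k * formH G (eA k) w) (eA g))" ..
qed

lemma reproducing_frame_HB: "reproducing_frame scaleH (formH G) (HB G) (involutions \<times> involutions) eB EB"
  unfolding reproducing_frame_def
proof (intro conjI ballI)
  show "finite (involutions \<times> involutions)" "eB ` (involutions \<times> involutions) \<subseteq> HB G"
    using eB_in_HB by auto
  fix w assume "w \<in> HB G"
  then obtain b where w: "w = (0, b)" and b: "invariant_matrix b" by (cases w) (auto simp: HB_eq)
  have "(\<Sum>q\<in>involutions \<times> involutions. EB p q * formH G (eB q) w) = b (fst p) (snd p) / card_G"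
    if "p \<in> involutions \<times> involutions" for p
    using that b by (auto simp: EB_def w formH_eB_HB if_distrib[of "\<lambda>t. t * _"] cong: if_cong)
  then have "(\<Sum>p\<in>involutions \<times> involutions.
        scaleH (\<Sum>q\<in>involutions \<times> involutions. EB p q * formH G (eB q) w) (eB p))
      = (\<Sum>p\<in>involutions \<times> involutions. scaleH (b (fst p) (snd p) / card_G) (eB p))"
    by (intro sum.cong) auto
  also have "\<dots> = w"
    using sum_invariant_matrix_conj_delta2[OF b]
    by (simp add: w fst_sum snd_sum sum_fun_apply scaleH_def eB_def sum.cartesian_product'
        sum_divide_distrib[symmetric] fun_eq_iff prod_eq_iff)
  finally show "w = (\<Sum>p\<in>involutions \<times> involutions.
      scaleH (\<Sum>q\<in>involutions \<times> involutions. EB p q * formH G (eB q) w) (eB p))" ..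
qed

lemma formH_nondegenerate_HA:
  assumes x: "x \<in> HA G" and orth: "\<forall>y\<in>HA G. formH G x y = 0" shows "x = 0"
proof -
  obtain a where xa: "x = (a, 0)" and a: "class_function a" using x by (cases x) (auto simp: HA_eq)
  have "a g = 0" for g
  proof (cases "g \<in> C")
    case True
    then have "a g = formH G (eA (inv g)) x" by (simp add: formH_eA_HA[OF _ a] xa)
    also have "\<dots> = 0" using orth eA_in_HA[of "inv g"] True formH_commute[of _ x] by simp
    finally show ?thesis .
  qed (use a in \<open>simp add: class_function_outside\<close>)
  then show ?thesis using xa by (simp add: fun_eq_iff zero_prod_def)
qed

lemma formH_nondegenerate_HB:
  assumes x: "x \<in> HB G" and orth: "\<forall>y\<in>HB G. formH G x y = 0" shows "x = 0"
proof -
  obtain b where xb: "x = (0, b)" and b: "invariant_matrix b" using x by (cases x) (auto simp: HB_eq)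
  have "b u v = 0" for u v
  proof (cases "u \<in> involutions \<and> v \<in> involutions")
    case True
    then have "b u v = formH G (eB (v, u)) x" by (simp add: formH_eB_HB[OF _ _ b] xb)
    also have "\<dots> = 0" using orth eB_in_HB[of "(v, u)"] True formH_commute[of _ x] by simp
    finally show ?thesis .
  qed (use invariant_matrix_outside[OF b] in auto)
  then show ?thesis using xb by (simp add: fun_eq_iff zero_prod_def)
qed

lemma contraction_HA:
  assumes "basis_invgram scaleH (formH G) (HA G) n f F" and "bilinear_form scaleH \<Phi>"
  shows "(\<Sum>i<n. \<Sum>j<n. F i j * \<Phi> (f i) (f j)) = (\<Sum>g\<in>C. \<Phi> (eA g) (eA (inv g)) / card_G)"
proof -
  have "(\<Sum>i<n. \<Sum>j<n. F i j * \<Phi> (f i) (f j)) = (\<Sum>g\<in>C. \<Sum>k\<in>C. EA g k * \<Phi> (eA g) (eA k))"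
    using assms formH_commute reproducing_frame_HA vector_space_scaleH bilinear_form_formH
    by (intro contraction_reproducing_frame_eq basis_invgram_reproducing_frame) auto
  also have "\<dots> = (\<Sum>g\<in>C. \<Phi> (eA g) (eA (inv g)) / card_G)"
    by (intro sum.cong refl) (simp add: EA_def if_distrib[of "\<lambda>t. t * _"] cong: if_cong)
  finally show ?thesis .
qed

lemma contraction_HB:
  assumes "basis_invgram scaleH (formH G) (HB G) n f F" and "bilinear_form scaleH \<Phi>"
  shows "(\<Sum>i<n. \<Sum>j<n. F i j * \<Phi> (f i) (f j))
    = (\<Sum>(x, y)\<in>involutions \<times> involutions. \<Phi> (eB (x, y)) (eB (y, x)) / card_G)"
proof -
  have "(\<Sum>i<n. \<Sum>j<n. F i j * \<Phi> (f i) (f j))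
      = (\<Sum>p\<in>involutions \<times> involutions. \<Sum>q\<in>involutions \<times> involutions. EB p q * \<Phi> (eB p) (eB q))"
    using assms formH_commute reproducing_frame_HB vector_space_scaleH bilinear_form_formH
    by (intro contraction_reproducing_frame_eq basis_invgram_reproducing_frame) auto
  also have "\<dots> = (\<Sum>(x, y)\<in>involutions \<times> involutions. \<Phi> (eB (x, y)) (eB (y, x)) / card_G)"
    by (intro sum.cong refl) (auto simp: EB_def if_distrib[of "\<lambda>t. t * _"] cong: if_cong)
  finally show ?thesis .
qed

lemma formH_sum_left: "formH G (\<Sum>a\<in>A. x a) y = (\<Sum>a\<in>A. formH G (x a) y)"
proof -
  have "formH G 0 y = 0" using formH_add_left[of 0 0 y] by simp
  then show ?thesis by (induct A rule: infinite_finite_induct) (simp_all add: formH_add_left)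
qed

lemma formH_K_star: "formH G (K_star scaleH (multH G) (starH G) n f F) y
    = (\<Sum>i<n. \<Sum>j<n. F i j * formH G (multH G (f i) (starH G (f j))) y)"
  by (simp add: K_star_def formH_sum_left formH_scale_left)

lemma formH_V_K: "formH G (V_K scaleH (multH G) m g Gm b1) b2
    = (\<Sum>k<m. \<Sum>l<m. Gm k l * formH G (multH G (multH G (g k) b1) (g l)) b2)"
  by (simp add: V_K_def formH_sum_left formH_scale_left)

section \<open>The element U\<close>

definition square_sum :: "'a \<Rightarrow> complex" where
  "square_sum z = (\<Sum>a\<in>C. if a \<otimes> a = z then 1 else 0)"

lemma class_function_square_sum: "class_function square_sum"
  unfolding class_function_def
proof (intro conjI ballI)
  show "supp_in G square_sum" by (auto simp: supp_in_def square_sum_def intro!: sum.neutral)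
  fix k z assume k: "k \<in> C" and z: "z \<in> C"
  show "square_sum (conjg k z) = square_sum z"
    using sum_reindex_conjg[OF k, of "\<lambda>a. if a \<otimes> a = conjg k z then 1 else (0::complex)"] k z
    by (simp add: square_sum_def conjg_mult[symmetric])
qed

lemma square_sum_in_HA: "(square_sum, 0) \<in> HA G"
  by (simp add: HA_eq class_function_square_sum)

lemma star_fun_conj_delta_inv: assumes g: "g \<in> C" shows "star_fun (conj_delta (inv g)) = conj_delta g"
proof
  fix z show "star_fun (conj_delta (inv g)) z = conj_delta g z"
  proof (cases "z \<in> C")
    case True
    have "(inv z = conjg h (inv g)) = (z = conjg h g)" if "h \<in> C" for h
      using that g True by (metis conjg_closed inv_conjg inv_inv)
    then show ?thesis using True by (simp add: star_fun_def conj_delta_def)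
  qed (use class_function_conj_delta[OF g] in \<open>simp add: star_fun_def class_function_outside\<close>)
qed

lemma conv_conj_delta_left:
  assumes "z \<in> C" "g \<in> C"
  shows "conv G (conj_delta g) b z = (\<Sum>h\<in>C. b (inv (conjg h g) \<otimes> z))"
proof -
  have "conv G (conj_delta g) b z = (\<Sum>m\<in>C. \<Sum>h\<in>C. if m = conjg h g then b (inv m \<otimes> z) else 0)"
    using assms by (simp add: conv_eq conj_delta_def sum_distrib_right if_distrib[of "\<lambda>t. t * _"]
        cong: if_cong)
  also have "\<dots> = (\<Sum>h\<in>C. b (inv (conjg h g) \<otimes> z))"
    using assms by (subst sum.swap) (intro sum.cong refl, simp)
  finally show ?thesis .
qed

lemma conv_square_sum_left:
  assumes "z \<in> C" shows "conv G square_sum b z = (\<Sum>a\<in>C. b (inv (a \<otimes> a) \<otimes> z))"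
proof -
  have "conv G square_sum b z = (\<Sum>m\<in>C. \<Sum>a\<in>C. if m = a \<otimes> a then b (inv m \<otimes> z) else 0)"
    using assms by (simp add: conv_eq square_sum_def sum_distrib_right if_distrib[of "\<lambda>t. t * _"]
        eq_commute[of "_ \<otimes> _"] cong: if_cong)
  also have "\<dots> = (\<Sum>a\<in>C. b (inv (a \<otimes> a) \<otimes> z))"
    using assms by (subst sum.swap) (intro sum.cong refl, simp)
  finally show ?thesis .
qed

lemma conv_conj_delta_self:
  assumes z: "z \<in> C" and g: "g \<in> C"
  shows "conv G (conj_delta g) (conj_delta g) z
    = (\<Sum>h\<in>C. \<Sum>k\<in>C. if z = conjg h g \<otimes> conjg k g then 1 else 0)"
  using z g by (simp add: conv_conj_delta_left) (simp add: conj_delta_def inv_solve_left')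

lemma conv_square_sum_self:
  assumes z: "z \<in> C"
  shows "conv G square_sum square_sum z = (\<Sum>a\<in>C. \<Sum>b\<in>C. if z = a \<otimes> a \<otimes> (b \<otimes> b) then 1 else 0)"
  using z by (simp add: conv_square_sum_left) (simp add: square_sum_def inv_solve_left)

lemma sum_conjg_pair_products:
  assumes h: "h \<in> C"
  shows "(\<Sum>g\<in>C. \<Sum>k\<in>C. if z = conjg h g \<otimes> conjg k g then 1 else 0)
    = (\<Sum>g\<in>C. \<Sum>m\<in>C. if z = g \<otimes> conjg m g then 1 else (0::complex))"
proof -
  have "(\<Sum>g\<in>C. \<Sum>k\<in>C. if z = conjg h g \<otimes> conjg k g then 1 else (0::complex))
      = (\<Sum>g\<in>C. \<Sum>k\<in>C. if z = g \<otimes> conjg (k \<otimes> inv h) g then 1 else 0)"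
    using h sum_reindex_conjg[OF inv_closed[OF h],
        of "\<lambda>g. \<Sum>k\<in>C. if z = conjg h g \<otimes> conjg k g then 1 else (0::complex)"]
    by (simp add: conjg_conjg)
  also have "\<dots> = (\<Sum>g\<in>C. \<Sum>m\<in>C. if z = g \<otimes> conjg m g then 1 else 0)"
    using h by (intro sum.cong refl sum_reindex_mult_right) simp
  finally show ?thesis .
qed

lemma sum_mult_conjg_self:
  "(\<Sum>g\<in>C. \<Sum>m\<in>C. if z = g \<otimes> conjg m g then 1 else (0::complex))
    = (\<Sum>a\<in>C. \<Sum>b\<in>C. if z = a \<otimes> a \<otimes> (b \<otimes> b) then 1 else 0)"
proof -
  have reindex: "(\<Sum>g\<in>C. if z = g \<otimes> conjg m g then 1 else (0::complex))
      = (\<Sum>a\<in>C. if z = a \<otimes> a \<otimes> (inv m \<otimes> inv m) then 1 else 0)" if m: "m \<in> C" for m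
    using m sum_reindex_mult_right[OF inv_closed[OF m],
        of "\<lambda>g. if z = g \<otimes> conjg m g then 1 else (0::complex)"]
    by (simp add: conjg_def m_assoc)
  have "(\<Sum>g\<in>C. \<Sum>m\<in>C. if z = g \<otimes> conjg m g then 1 else (0::complex))
      = (\<Sum>m\<in>C. \<Sum>g\<in>C. if z = g \<otimes> conjg m g then 1 else 0)"
    by (rule sum.swap)
  also have "\<dots> = (\<Sum>m\<in>C. \<Sum>a\<in>C. if z = a \<otimes> a \<otimes> (m \<otimes> m) then 1 else 0)"
    using sum_reindex_inv[of "\<lambda>m. \<Sum>a\<in>C. if z = a \<otimes> a \<otimes> (m \<otimes> m) then 1 else (0::complex)"]
    by (simp add: reindex)
  also have "\<dots> = (\<Sum>a\<in>C. \<Sum>b\<in>C. if z = a \<otimes> a \<otimes> (b \<otimes> b) then 1 else 0)"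
    by (rule sum.swap)
  finally show ?thesis .
qed

text \<open>This identity is where the witness \<open>U = (square_sum, 0)\<close>, the sum of all squares,
  comes from.\<close>

lemma sum_conv_conj_delta_self:
  assumes z: "z \<in> C"
  shows "(\<Sum>g\<in>C. conv G (conj_delta g) (conj_delta g) z) = card_G * conv G square_sum square_sum z"
proof -
  have "(\<Sum>g\<in>C. conv G (conj_delta g) (conj_delta g) z)
      = (\<Sum>h\<in>C. \<Sum>g\<in>C. \<Sum>k\<in>C. if z = conjg h g \<otimes> conjg k g then 1 else 0)"
    using z by (simp add: conv_conj_delta_self) (rule sum.swap)
  also have "\<dots> = card_G * (\<Sum>a\<in>C. \<Sum>b\<in>C. if z = a \<otimes> a \<otimes> (b \<otimes> b) then 1 else 0)"
    by (simp add: sum_conjg_pair_products sum_mult_conjg_self)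
  finally show ?thesis using z by (simp add: conv_square_sum_self)
qed

lemma bilinear_form_formH_mult_star: "bilinear_form scaleH (\<lambda>p q. formH G (multH G p (starH G q)) y)"
  by (simp add: bilinear_form_def formH_add_left formH_scale_left multH_add_left multH_add_right
      multH_scale_left multH_scale_right starH_add starH_scale)

lemma bilinear_form_formH_sandwich: "bilinear_form scaleH (\<lambda>p q. formH G (multH G (multH G p b1) q) b2)"
  by (simp add: bilinear_form_def formH_add_left formH_scale_left multH_add_left multH_add_right
      multH_scale_left multH_scale_right)

lemma bilinear_form_formH_product: "bilinear_form scaleH (\<lambda>p q. formH G p b1 * formH G q b2)"
  by (simp add: bilinear_form_def formH_add_left formH_scale_left algebra_simps)

lemma HA_eqI:
  assumes "x \<in> HA G" "x' \<in> HA G" and "\<And>y. y \<in> HA G \<Longrightarrow> formH G x y = formH G x' y"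
  shows "x = x'"
proof -
  interpret V: vector_space scaleH by (rule vector_space_scaleH)
  have "formH G (x - x') y = formH G x y - formH G x' y" for y
    using formH_add_left[of "x - x'" x' y] by simp
  then have "x - x' = 0"
    using assms V.subspace_diff[OF subspace_HA] by (intro formH_nondegenerate_HA) auto
  then show ?thesis by simp
qed

lemma starH_eA_inv: "g \<in> C \<Longrightarrow> starH G (eA (inv g)) = eA g"
  by (simp add: starH_eq eA_def star_fun_conj_delta_inv fun_eq_iff zero_fun_def)

lemma formH_eA_mult_star:
  assumes "g \<in> C" "w \<in> HA G"
  shows "formH G (multH G (eA g) (starH G (eA (inv g)))) w
    = conv G (conv G (conj_delta g) (conj_delta g)) (fst w) \<one> / card_G"
  using assms by (cases w) (simp add: starH_eA_inv multH_HA eA_in_HA, simp add: eA_def HA_eq formH_HA_HA)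

lemma square_sum_square_eq_K_star_HA:
  assumes basis: "basis_invgram scaleH (formH G) (HA G) n f F"
  shows "multH G (square_sum, 0) (square_sum, 0) = K_star scaleH (multH G) (starH G) n f F"
proof (rule HA_eqI)
  interpret V: vector_space scaleH by (rule vector_space_scaleH)
  show "multH G (square_sum, 0) (square_sum, 0) \<in> HA G"
    using square_sum_in_HA by (intro multH_HA_closed)
  have "f i \<in> HA G" if "i < n" for i using basis that by (auto simp: basis_invgram_def)
  then show "K_star scaleH (multH G) (starH G) n f F \<in> HA G"
    unfolding K_star_def
    by (intro V.subspace_sum[OF subspace_HA] V.subspace_scale[OF subspace_HA] multH_HA_closed starH_HA)
      auto
  fix y assume y: "y \<in> HA G"
  then obtain w where w: "y = (w, 0)" by (cases y) (auto simp: HA_eq)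
  have "formH G (K_star scaleH (multH G) (starH G) n f F) y
      = (\<Sum>g\<in>C. conv G (conv G (conj_delta g) (conj_delta g)) w \<one> / card_G / card_G)"
    using y by (simp add: formH_K_star contraction_HA[OF basis bilinear_form_formH_mult_star]
        formH_eA_mult_star w)
  also have "\<dots> = (\<Sum>h\<in>C. (\<Sum>g\<in>C. conv G (conj_delta g) (conj_delta g) h) * w (inv h) / card_G / card_G)"
    by (simp add: conv_eq sum_divide_distrib sum_distrib_right) (rule sum.swap)
  also have "\<dots> = (\<Sum>h\<in>C. conv G square_sum square_sum h * w (inv h) / card_G)"
    by (intro sum.cong refl) (simp add: sum_conv_conj_delta_self)
  also have "\<dots> = formH G (multH G (square_sum, 0) (square_sum, 0)) y"
    by (simp add: w multH_def formH_HA_HA conv_eq[OF one_closed] sum_divide_distrib)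
  finally show "formH G (multH G (square_sum, 0) (square_sum, 0)) y
      = formH G (K_star scaleH (multH G) (starH G) n f F) y" ..
qed

text \<open>The substitution \<open>x \<mapsto> z x\<close> turns \<open>x^-2 z\<close> into \<open>x^-1 z^-1 x^-1\<close>, which is conjugate
  to \<open>x^-2 z^-1\<close>.\<close>

lemma conv_square_sum_inv:
  assumes a: "class_function a" and z: "z \<in> C"
  shows "conv G square_sum a (inv z) = conv G square_sum a z"
proof -
  have "inv (z \<otimes> x \<otimes> (z \<otimes> x)) \<otimes> z = conjg x (inv (x \<otimes> x) \<otimes> inv z)" if "x \<in> C" for x
    using that z by (simp add: conjg_def inv_mult_group m_assoc)
  then have "conv G square_sum a z = (\<Sum>x\<in>C. a (conjg x (inv (x \<otimes> x) \<otimes> inv z)))"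
    using z sum_reindex_mult_left[OF z, of "\<lambda>x. a (inv (x \<otimes> x) \<otimes> z)"]
    by (simp add: conv_square_sum_left)
  also have "\<dots> = conv G square_sum a (inv z)"
    using a z by (simp add: conv_square_sum_left class_functionD)
  finally show ?thesis ..
qed

lemma starH_mult_square_sum:
  assumes "x \<in> HA G" shows "starH G (multH G x (square_sum, 0)) = multH G x (square_sum, 0)"
proof -
  obtain a where x: "x = (a, 0)" and a: "class_function a" using assms by (cases x) (auto simp: HA_eq)
  have "star_fun (conv G a square_sum) = conv G a square_sum"
    using conv_square_sum_inv[OF a]
    by (auto simp: fun_eq_iff star_fun_def class_function_conv_commute[OF class_function_square_sum]
        conv_outside)
  then show ?thesis using assms square_sum_in_HA by (simp add: x multH_HA starH_eq fun_eq_iff)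
qed

section \<open>Traces over the frame of B\<close>

lemma conj_delta2_mmul:
  assumes "x \<in> C" "y \<in> C"
  shows "mmul G (conj_delta2 x y) M u w = (\<Sum>h\<in>C. if u = conjg h x then M (conjg h y) w else 0)"
proof -
  have "mmul G (conj_delta2 x y) M u w
      = (\<Sum>h\<in>C. \<Sum>v\<in>C. if v = conjg h y then (if u = conjg h x then M v w else 0) else 0)"
    unfolding mmul_def conj_delta2_def sum_distrib_right
    by (subst sum.swap) (auto intro!: sum.cong)
  then show ?thesis using assms by simp
qed

lemma mmul_conj_delta2:
  assumes "p \<in> C" "q \<in> C"
  shows "mmul G M (conj_delta2 p q) w s = (\<Sum>k\<in>C. if s = conjg k q then M w (conjg k p) else 0)"
proof -
  have "mmul G M (conj_delta2 p q) w s
      = (\<Sum>k\<in>C. \<Sum>v\<in>C. if v = conjg k p then (if s = conjg k q then M w v else 0) else 0)"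
    unfolding mmul_def conj_delta2_def sum_distrib_left
    by (subst sum.swap) (auto intro!: sum.cong)
  then show ?thesis using assms by simp
qed

lemma trace_conj_delta2_sandwich:
  assumes "x \<in> C" "y \<in> C" "p \<in> C" "q \<in> C"
  shows "trace (mmul G (mmul G (mmul G (conj_delta2 x y) M) (conj_delta2 p q)) N)
    = (\<Sum>h\<in>C. \<Sum>k\<in>C. M (conjg h y) (conjg k p) * N (conjg k q) (conjg h x))"
proof -
  let ?T = "\<lambda>h k. M (conjg h y) (conjg k p) * N (conjg k q) (conjg h x)"
  have "trace (mmul G (mmul G (mmul G (conj_delta2 x y) M) (conj_delta2 p q)) N)
      = (\<Sum>u\<in>C. \<Sum>s\<in>C. \<Sum>k\<in>C. if s = conjg k q then (\<Sum>h\<in>C. if u = conjg h x then ?T h k else 0) else 0)"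
    using assms
    by (simp add: trace_def mmul_def[of _ _ N] mmul_conj_delta2 conj_delta2_mmul sum_distrib_right
        if_distrib[of "\<lambda>t. t * _"] cong: if_cong)
  also have "\<dots> = (\<Sum>k\<in>C. \<Sum>u\<in>C. \<Sum>h\<in>C. if u = conjg h x then ?T h k else 0)"
    using assms by (subst sum_swap_inner_outer) simp
  also have "\<dots> = (\<Sum>k\<in>C. \<Sum>h\<in>C. ?T h k)"
    by (rule sum.cong[OF refl], subst sum.swap) (simp add: assms)
  also have "\<dots> = (\<Sum>h\<in>C. \<Sum>k\<in>C. ?T h k)"
    by (rule sum.swap)
  finally show ?thesis .
qed

lemma sum_conjg_pairs_reindex:
  "(\<Sum>h\<in>C. \<Sum>k\<in>C. f h k) = (\<Sum>h\<in>C. \<Sum>m\<in>C. f h (h \<otimes> m))"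
  by (intro sum.cong refl sum_reindex_mult_left[symmetric])

lemma trace_conj_delta2_square:
  assumes x: "x \<in> C" and y: "y \<in> C" and b: "invariant_matrix b"
  shows "trace (mmul G (mmul G (conj_delta2 x y) (conj_delta2 x y)) b)
    = card_G * (\<Sum>m\<in>C. if y = conjg m x then b (conjg m y) x else 0)"
proof -
  have "mmul G (conj_delta2 x y) id_mat = conj_delta2 x y"
    using x y by (intro mmul_id_mat_right) (auto simp: conj_delta2_def intro!: sum.neutral)
  then have "trace (mmul G (mmul G (conj_delta2 x y) (conj_delta2 x y)) b)
      = (\<Sum>h\<in>C. \<Sum>k\<in>C. id_mat (conjg h y) (conjg k x) * b (conjg k y) (conjg h x))"
    using trace_conj_delta2_sandwich[OF x y x y, of id_mat b] by simp
  also have "\<dots> = (\<Sum>h\<in>C. \<Sum>m\<in>C. id_mat (conjg h y) (conjg (h \<otimes> m) x) * b (conjg (h \<otimes> m) y) (conjg h x))"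
    by (rule sum_conjg_pairs_reindex)
  also have "\<dots> = (\<Sum>h\<in>C. \<Sum>m\<in>C. if y = conjg m x then b (conjg m y) x else 0)"
  proof (intro sum.cong refl)
    fix h m assume h: "h \<in> C" and m: "m \<in> C"
    have "b (conjg (h \<otimes> m) y) (conjg h x) = b (conjg m y) x"
      using invariant_matrix_conjg[OF b h, of "conjg m y" x] h m x y by (simp add: conjg_conjg)
    then show "id_mat (conjg h y) (conjg (h \<otimes> m) x) * b (conjg (h \<otimes> m) y) (conjg h x)
        = (if y = conjg m x then b (conjg m y) x else 0)"
      using h m x y by (simp add: id_mat_def conjg_conjg[symmetric])
  qed
  finally show ?thesis by simp
qed

lemma formH_square_sum_HB:
  assumes b: "invariant_matrix b"
  shows "formH G (square_sum, 0) (0, b) = (\<Sum>m\<in>C. \<Sum>x\<in>C. b (conjg (m \<otimes> m) x) x) / card_G"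
proof -
  have "trace (mmul G (Vmat G square_sum) b) = (\<Sum>y\<in>C. \<Sum>c\<in>C. b (conjg (inv (c \<otimes> c)) y) y)"
    by (simp add: trace_def Vmat_mmul_left square_sum_def sum_distrib_right if_distrib[of "\<lambda>t. t * _"]
        eq_commute[of "_ \<otimes> _"] cong: if_cong) (rule sum.cong[OF refl], subst sum.swap, simp)
  also have "\<dots> = (\<Sum>c\<in>C. \<Sum>y\<in>C. b (conjg (c \<otimes> c) y) y)"
    using sum_reindex_inv[of "\<lambda>c. \<Sum>y\<in>C. b (conjg (inv (c \<otimes> c)) y) y"]
    by (subst sum.swap) (simp add: inv_mult_group)
  finally show ?thesis by (simp add: formH_HA_HB)
qed

lemma sum_involutions_eq_sum_carrier:
  "(\<And>x. x \<in> C \<Longrightarrow> x \<notin> involutions \<Longrightarrow> f x = 0) \<Longrightarrow> (\<Sum>x\<in>involutions. f x) = (\<Sum>x\<in>C. f x)"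
  using involutions_subset by (intro sum.mono_neutral_left) auto

lemma starH_eB_swap: "starH G (eB (y, x)) = eB (x, y)"
  by (simp add: starH_eq eB_def star_fun_def conj_delta2_def fun_eq_iff conj_commute)

lemma formH_eB_mult_star:
  assumes "x \<in> involutions" "y \<in> involutions" and b: "invariant_matrix b"
  shows "formH G (multH G (eB (x, y)) (starH G (eB (y, x)))) (0, b)
    = (\<Sum>m\<in>C. if y = conjg m x then b (conjg m y) x else 0)"
proof -
  have "x \<in> C" "y \<in> C" using assms involutions_subset by auto
  then show ?thesis
    using trace_conj_delta2_square[OF _ _ b]
    by (simp only: starH_eB_swap) (simp add: eB_def multH_def formH_HB_HB)
qed

lemma formH_square_sum_eq_K_star_HB:
  assumes basis: "basis_invgram scaleH (formH G) (HB G) n f F" and "w \<in> HB G"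
  shows "formH G (square_sum, 0) w = formH G (K_star scaleH (multH G) (starH G) n f F) w"
proof -
  obtain b where w: "w = (0, b)" and b: "invariant_matrix b"
    using assms(2) by (cases w) (auto simp: HB_eq)
  have "formH G (K_star scaleH (multH G) (starH G) n f F) w
      = (\<Sum>x\<in>involutions. \<Sum>y\<in>involutions. \<Sum>m\<in>C.
           if y = conjg m x then b (conjg m y) x / card_G else 0)"
    by (simp add: formH_K_star contraction_HB[OF basis bilinear_form_formH_mult_star] w
        formH_eB_mult_star[OF _ _ b] sum.cartesian_product[symmetric] sum_divide_distrib
        if_distrib[of "\<lambda>t. t / card_G"] cong: if_cong)
  also have "\<dots> = (\<Sum>x\<in>involutions. \<Sum>m\<in>C. b (conjg (m \<otimes> m) x) x / card_G)"
  proof (rule sum.cong[OF refl], subst sum.swap)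
    fix x assume "x \<in> involutions"
    then show "(\<Sum>m\<in>C. \<Sum>y\<in>involutions. if y = conjg m x then b (conjg m y) x / card_G else 0)
      = (\<Sum>m\<in>C. b (conjg (m \<otimes> m) x) x / card_G)"
      using involutions_subset by (intro sum.cong refl) (auto simp: conjg_conjg)
  qed
  also have "\<dots> = (\<Sum>m\<in>C. \<Sum>x\<in>C. b (conjg (m \<otimes> m) x) x) / card_G"
    using invariant_matrix_outside[OF b]
    by (subst sum.swap) (simp add: sum_involutions_eq_sum_carrier sum_divide_distrib)
  finally show ?thesis by (simp add: w formH_square_sum_HB[OF b])
qed

lemma formH_eA_HB:
  assumes g: "g \<in> C" and b: "invariant_matrix b"
  shows "formH G (eA g) (0, b) = (\<Sum>y\<in>C. b (conjg (inv g) y) y)"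
proof -
  have inner: "(\<Sum>y\<in>C. b (conjg (conjg h (inv g)) y) y) = (\<Sum>y\<in>C. b (conjg (inv g) y) y)"
    if h: "h \<in> C" for h
    using sum_reindex_conjg[OF h, of "\<lambda>y. b (conjg (conjg h (inv g)) y) y"] h g
    by (simp add: conjg_conjg_conjg invariant_matrix_conjg[OF b])
  have "trace (mmul G (Vmat G (conj_delta g)) b)
      = (\<Sum>y\<in>C. \<Sum>h\<in>C. b (conjg (inv (conjg h g)) y) y)"
    by (simp add: trace_def Vmat_mmul_left conj_delta_def sum_distrib_right if_distrib[of "\<lambda>t. t * _"]
        cong: if_cong) (rule sum.cong[OF refl], subst sum.swap, simp add: g)
  also have "\<dots> = card_G * (\<Sum>y\<in>C. b (conjg (inv g) y) y)"
    using g by (subst sum.swap) (simp add: inv_conjg inner)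
  finally show ?thesis by (simp add: eA_def formH_HA_HB)
qed

lemma formH_eB_sandwich:
  assumes x: "x \<in> C" and y: "y \<in> C" and b1: "invariant_matrix b1" and b2: "invariant_matrix b2"
  shows "formH G (multH G (multH G (eB (x, y)) (0, b1)) (eB (y, x))) (0, b2)
    = (\<Sum>m\<in>C. b1 y (conjg m y) * b2 (conjg m x) x)"
proof -
  have "trace (mmul G (mmul G (mmul G (conj_delta2 x y) b1) (conj_delta2 y x)) b2)
      = (\<Sum>h\<in>C. \<Sum>k\<in>C. b1 (conjg h y) (conjg k y) * b2 (conjg k x) (conjg h x))"
    by (rule trace_conj_delta2_sandwich[OF x y y x])
  also have "\<dots> = (\<Sum>h\<in>C. \<Sum>m\<in>C. b1 (conjg h y) (conjg (h \<otimes> m) y) * b2 (conjg (h \<otimes> m) x) (conjg h x))"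
    by (rule sum_conjg_pairs_reindex)
  also have "\<dots> = card_G * (\<Sum>m\<in>C. b1 y (conjg m y) * b2 (conjg m x) x)"
    using x y
    by (simp add: conjg_conjg[symmetric] invariant_matrix_conjg[OF b1] invariant_matrix_conjg[OF b2])
  finally show ?thesis by (simp add: eB_def multH_def formH_HB_HB)
qed

lemma formH_V_K_eq_contraction_HA:
  assumes basisA: "basis_invgram scaleH (formH G) (HA G) n f F"
    and basisB: "basis_invgram scaleH (formH G) (HB G) m g Gm"
    and w1: "w1 \<in> HB G" and w2: "w2 \<in> HB G"
  shows "formH G (V_K scaleH (multH G) m g Gm w1) w2
    = (\<Sum>i<n. \<Sum>j<n. F i j * formH G (f i) w1 * formH G (f j) w2)"
proof -
  obtain b1 b2 where w: "w1 = (0, b1)" "w2 = (0, b2)" and b: "invariant_matrix b1" "invariant_matrix b2"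
    using w1 w2 by (cases w1, cases w2) (auto simp: HB_eq)
  have "formH G (V_K scaleH (multH G) m g Gm w1) w2
      = (\<Sum>x\<in>involutions. \<Sum>y\<in>involutions. \<Sum>k\<in>C. b1 y (conjg k y) * b2 (conjg k x) x / card_G)"
    using involutions_subset
    by (simp add: formH_V_K contraction_HB[OF basisB bilinear_form_formH_sandwich] w subset_iff
        formH_eB_sandwich b sum.cartesian_product[symmetric] sum_divide_distrib)
  also have "\<dots> = (\<Sum>k\<in>C. \<Sum>x\<in>C. \<Sum>y\<in>C. b1 y (conjg k y) * b2 (conjg k x) x / card_G)"
    using invariant_matrix_outside[OF b(1)] invariant_matrix_outside[OF b(2)]
    by (subst sum_swap_inner_outer) (simp add: sum_involutions_eq_sum_carrier)
  also have "\<dots> = (\<Sum>k\<in>C. formH G (eA k) w1 * formH G (eA (inv k)) w2 / card_G)"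
  proof (intro sum.cong refl)
    fix k assume k: "k \<in> C"
    have "(\<Sum>x\<in>C. \<Sum>y\<in>C. b1 y (conjg k y) * b2 (conjg k x) x / card_G)
        = (\<Sum>y\<in>C. b1 y (conjg k y)) * (\<Sum>x\<in>C. b2 (conjg k x) x) / card_G"
      by (subst sum.swap) (simp add: sum_product sum_divide_distrib)
    also have "(\<Sum>y\<in>C. b1 y (conjg k y)) = (\<Sum>y\<in>C. b1 (conjg (inv k) y) y)"
      using k sum_reindex_conjg[OF inv_closed[OF k], of "\<lambda>y. b1 y (conjg k y)"] by simp
    finally show "(\<Sum>x\<in>C. \<Sum>y\<in>C. b1 y (conjg k y) * b2 (conjg k x) x / card_G)
        = formH G (eA k) w1 * formH G (eA (inv k)) w2 / card_G"
      using k by (simp add: w formH_eA_HB b)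
  qed
  also have "\<dots> = (\<Sum>i<n. \<Sum>j<n. F i j * formH G (f i) w1 * formH G (f j) w2)"
    using contraction_HA[OF basisA bilinear_form_formH_product] by (simp add: mult.assoc)
  finally show ?thesis .
qed

definition involution_id :: "'a \<Rightarrow> 'a \<Rightarrow> complex" where
  "involution_id = (\<lambda>u v. if u \<in> involutions \<and> u = v then 1 else 0)"

lemma invariant_matrix_involution_id: "invariant_matrix involution_id"
  by (rule invariant_matrixI) (auto simp: involution_id_def involutions_subset[THEN subsetD])

lemma mmul_involution_id:
  assumes b: "invariant_matrix b"
  shows "mmul G involution_id b = b" "mmul G b involution_id = b"
proof -
  have "mmul G involution_id b u v = b u v" for u v
  proof -
    have "mmul G involution_id b u v
        = (\<Sum>z\<in>C. if z = u then (if u \<in> involutions then b z v else 0) else 0)"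
      unfolding mmul_def involution_id_def by (rule sum.cong) auto
    then show ?thesis using invariant_matrix_outside[OF b] involutions_subset by auto
  qed
  moreover have "mmul G b involution_id u v = b u v" for u v
  proof -
    have "mmul G b involution_id u v
        = (\<Sum>z\<in>C. if z = v then (if v \<in> involutions then b u z else 0) else 0)"
      unfolding mmul_def involution_id_def by (rule sum.cong) auto
    then show ?thesis using invariant_matrix_outside[OF b] involutions_subset by auto
  qed
  ultimately show "mmul G involution_id b = b" "mmul G b involution_id = b" by (simp_all add: fun_eq_iff)
qed

lemma HB_has_unit: "\<exists>e\<in>HB G. \<forall>b\<in>HB G. multH G e b = b \<and> multH G b e = b"
proof
  show "(0, involution_id) \<in> HB G" by (simp add: HB_eq invariant_matrix_involution_id)
  show "\<forall>b\<in>HB G. multH G (0, involution_id) b = b \<and> multH G b (0, involution_id) = b"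
    by (auto simp: HB_eq multH_def mmul_involution_id)
qed

lemma HA_inter_HB: "HA G \<inter> HB G = {0}"
  by (auto simp: HA_eq HB_eq zero_prod_def class_function_zero invariant_matrix_zero)

lemma finite_span_H_carrier: "\<exists>S. finite S \<and> S \<subseteq> H_carrier \<and> module.span scaleH S = H_carrier"
  using finite_span_direct_sum[OF vector_space_scaleH subspace_HA subspace_HB reproducing_frame_HA
      reproducing_frame_HB]
  by (simp add: direct_sum_eq)

lemma starH_image_HA: "starH G ` HA G = HA G"
  using starH_HA starH_starH HA_subset by (intro image_eq_if_involutive) auto

lemma starH_image_HB: "starH G ` HB G = HB G"
  using starH_HB starH_starH HB_subset by (intro image_eq_if_involutive) auto

lemma formH_multH_assoc: "formH G (multH G x y) z = formH G x (multH G y z)"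
  by (simp add: formH_def multH_assoc)

lemma structure_algebra_H:
  "structure_algebra scaleH (HA G) (HB G) (multH G) (oneH G) (formH G) (starH G) (square_sum, 0)"
proof -
  note components = vector_space_scaleH subspace_HA subspace_HB HA_inter_HB finite_span_H_carrier
    multH_closed multH_add_left multH_add_right multH_scale_left multH_scale_right multH_assoc
    HA_subset[THEN subsetD, OF oneH_in_HA] multH_oneH
    formH_add_left formH_scale_left formH_commute formH_multH_assoc
    starH_closed starH_add starH_scale starH_mult starH_starH
    square_sum_in_HA multH_HA_closed multH_HA_commute oneH_in_HA multH_HB_closed HB_has_unit
    formH_nondegenerate_HA formH_nondegenerate_HB formH_V_K_eq_contraction_HA
    starH_image_HA starH_image_HB formH_starH
    square_sum_square_eq_K_star_HA formH_square_sum_eq_K_star_HB starH_mult_square_sum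
  show ?thesis
    unfolding structure_algebra_def Let_def direct_sum_eq
    by (intro conjI ballI allI impI; (rule components; assumption))
qed

end

theorem theorem2p2:
  fixes G :: "'g monoid"
  assumes "group G" and "finite (carrier G)"
  shows "\<exists>U \<in> HA G. structure_algebra scaleH (HA G) (HB G) (multH G) (oneH G) (formH G) (starH G) U"
proof -
  interpret finite_group G
    using assms by (simp add: finite_group_def finite_group_axioms_def)
  show ?thesis using square_sum_in_HA structure_algebra_H by blast
qed

end
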